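(* Let $\Omega\subset\mathbb{R}^N$ be open and bounded, $1<p<N$, $F:\Omega\times(0,\infty)\to[0,\infty)$ a Carathéodory function, and let $u$ be a weak solution of $-\Delta_p u=F(x,u)$, $u>0$ in $\Omega$, $u=0$ on $\partial\Omega$. Then for every nonnegative $\varphi\in W^{1,p}_0(\Omega)$ one has $F(x,u)\varphi\in L^1(\Omega)$, and for every $\varphi\in W^{1,p}_0(\Omega)$ one has $F(x,u)\varphi\in L^1(\Omega)$ and $\int_\Omega|\nabla u|^{p-2}\nabla u\cdot\nabla\varphi=\int_\Omega F(x,u)\varphi$.
   Context: $\Delta_p u=\operatorname{div}(|\nabla u|^{p-2}\nabla u)$. A weak solution of $-\Delta_p u=F(x,u)$, $u>0$ in $\Omega$, $u=0$ on $\partial\Omega$, is a function $u\in W^{1,p}_0(\Omega)$ with $u>0$ a.e. in $\Omega$, such that $F(x,u)\in L^1_{\rm loc}(\Omega)$ and $\int_\Omega|\nabla u|^{p-2}\nabla u\cdot\nabla\varphi=\int_\Omega F(x,u)\varphi$ for all $\varphi\in C^1_c(\Omega)$. *)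

theory Defs
  imports "HOL-Analysis.Analysis"
begin

text \<open>Functions on an open set \<Omega> of a Euclidean space 'a (dimension N = DIM('a)).
  All integrals are Lebesgue integrals over \<Omega>, i.e. w.r.t. lebesgue_on \<Omega>.\<close>

definition C1c_grad :: "'a::euclidean_space set \<Rightarrow> ('a \<Rightarrow> real) \<Rightarrow> ('a \<Rightarrow> 'a) \<Rightarrow> bool" where
  "C1c_grad \<Omega> phi Dphi \<longleftrightarrow>
     (\<forall>x. (phi has_derivative (\<lambda>h. Dphi x \<bullet> h)) (at x)) \<and> continuous_on UNIV Dphi \<and>
     (\<exists>K. compact K \<and> K \<subseteq> \<Omega> \<and> (\<forall>x. x \<notin> K \<longrightarrow> phi x = 0))"

definition locally_integrable_on :: "'a::euclidean_space set \<Rightarrow> ('a \<Rightarrow> 'b::{banach,second_countable_topology}) \<Rightarrow> bool" where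
  "locally_integrable_on \<Omega> f \<longleftrightarrow>
     (\<forall>K. compact K \<and> K \<subseteq> \<Omega> \<longrightarrow> integrable (lebesgue_on K) f)"

definition weak_gradient :: "'a::euclidean_space set \<Rightarrow> ('a \<Rightarrow> real) \<Rightarrow> ('a \<Rightarrow> 'a) \<Rightarrow> bool" where
  "weak_gradient \<Omega> u g \<longleftrightarrow>
     locally_integrable_on \<Omega> u \<and> locally_integrable_on \<Omega> g \<and>
     (\<forall>phi Dphi. C1c_grad \<Omega> phi Dphi \<longrightarrow>
        (\<forall>i\<in>Basis. integral\<^sup>L (lebesgue_on \<Omega>) (\<lambda>x. u x * (Dphi x \<bullet> i))
                    = - integral\<^sup>L (lebesgue_on \<Omega>) (\<lambda>x. (g x \<bullet> i) * phi x)))"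

definition Lp_on :: "real \<Rightarrow> 'a::euclidean_space set \<Rightarrow> ('a \<Rightarrow> 'b::{banach,second_countable_topology}) \<Rightarrow> bool" where
  "Lp_on p \<Omega> f \<longleftrightarrow> f \<in> borel_measurable (lebesgue_on \<Omega>) \<and>
     integrable (lebesgue_on \<Omega>) (\<lambda>x. norm (f x) powr p)"

text \<open>W^{1,p}_0(\<Omega>): closure of C^1_c(\<Omega>) in the W^{1,p}(\<Omega>) norm.\<close>
definition W01p :: "real \<Rightarrow> 'a::euclidean_space set \<Rightarrow> ('a \<Rightarrow> real) set" where
  "W01p p \<Omega> = {u. Lp_on p \<Omega> u \<and>
     (\<exists>g. weak_gradient \<Omega> u g \<and> Lp_on p \<Omega> g \<and>
        (\<exists>phis Dphis. (\<forall>k::nat. C1c_grad \<Omega> (phis k) (Dphis k)) \<and>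
           (\<lambda>k. integral\<^sup>L (lebesgue_on \<Omega>) (\<lambda>x. \<bar>phis k x - u x\<bar> powr p)) \<longlonglongrightarrow> 0 \<and>
           (\<lambda>k. integral\<^sup>L (lebesgue_on \<Omega>) (\<lambda>x. norm (Dphis k x - g x) powr p)) \<longlonglongrightarrow> 0))}"

definition caratheodory_nonneg :: "'a::euclidean_space set \<Rightarrow> ('a \<Rightarrow> real \<Rightarrow> real) \<Rightarrow> bool" where
  "caratheodory_nonneg \<Omega> F \<longleftrightarrow>
     (\<forall>s>0. (\<lambda>x. F x s) \<in> borel_measurable (lebesgue_on \<Omega>)) \<and>
     (AE x in lebesgue_on \<Omega>. continuous_on {0<..} (F x)) \<and>
     (\<forall>x\<in>\<Omega>. \<forall>s>0. F x s \<ge> 0)"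

definition weak_solution :: "real \<Rightarrow> 'a::euclidean_space set \<Rightarrow> ('a \<Rightarrow> real \<Rightarrow> real) \<Rightarrow> ('a \<Rightarrow> real) \<Rightarrow> bool" where
  "weak_solution p \<Omega> F u \<longleftrightarrow>
     u \<in> W01p p \<Omega> \<and> (AE x in lebesgue_on \<Omega>. u x > 0) \<and>
     locally_integrable_on \<Omega> (\<lambda>x. F x (u x)) \<and>
     (\<forall>g. weak_gradient \<Omega> u g \<longrightarrow>
        (\<forall>phi Dphi. C1c_grad \<Omega> phi Dphi \<longrightarrow>
           integral\<^sup>L (lebesgue_on \<Omega>) (\<lambda>x. norm (g x) powr (p - 2) * (g x \<bullet> Dphi x))
           = integral\<^sup>L (lebesgue_on \<Omega>) (\<lambda>x. F x (u x) * phi x)))"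

end

theory Submission
  imports Defs
begin

text \<open>
  Write \<open>\<phi>\<close> as the \<open>W\<^sup>1\<^sup>,\<^sup>p\<close>-limit of \<open>C\<^sup>1\<^sub>c\<close> functions \<open>\<phi>\<^sub>k\<close>. The smoothed absolute values
  \<open>sqrt (\<phi>\<^sub>k\<^sup>2 + e\<^sub>k\<^sup>2) - e\<^sub>k\<close> are nonnegative test functions with gradients bounded by \<open>|\<nabla>\<phi>\<^sub>k|\<close>;
  testing the equation with them and using \<open>x\<^sup>p\<^sup>-\<^sup>1 y \<le> \<epsilon> x\<^sup>p + \<epsilon>\<^sup>1\<^sup>-\<^sup>p y\<^sup>p\<close>, Fatou's lemma (here \<open>F \<ge> 0\<close>
  is essential) gives \<open>\<integral> F(x,u) |\<phi>| \<le> \<epsilon> \<parallel>\<nabla>u\<parallel>\<^sub>p\<^sup>p + C\<^sub>\<epsilon> \<parallel>\<nabla>\<phi>\<parallel>\<^sub>p\<^sup>p\<close>. Applied to \<open>\<phi> - \<phi>\<^sub>k\<close> this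
  yields \<open>\<integral> F(x,u) \<phi>\<^sub>k \<rightarrow> \<integral> F(x,u) \<phi>\<close>, while the left-hand sides converge by the same inequality.
  Weak gradients are unique almost everywhere (fundamental lemma of the calculus of variations),
  so the identity holds for every choice of them.
\<close>

section \<open>Smooth approximations of the indicator of a box\<close>

definition smooth_step :: "real \<Rightarrow> real" where
  "smooth_step t = (max 0 t)^2 / (1 + (max 0 t)^2)"

definition smooth_step' :: "real \<Rightarrow> real" where
  "smooth_step' t = 2 * max 0 t / (1 + t^2)^2"

lemma one_plus_square_pos: "0 < 1 + (x::real)^2"
  by (simp add: add_pos_nonneg)

lemma smooth_step_bounds:
  "0 \<le> smooth_step t" "smooth_step t \<le> 1" "t \<le> 0 \<Longrightarrow> smooth_step t = 0" "smooth_step t \<le> t^2"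
proof -
  have pos: "0 < 1 + (max 0 t)^2" by (rule one_plus_square_pos)
  show "0 \<le> smooth_step t" "t \<le> 0 \<Longrightarrow> smooth_step t = 0"
    by (simp_all add: smooth_step_def)
  show "smooth_step t \<le> 1"
    using pos by (simp add: smooth_step_def divide_le_eq)
  have "(max 0 t)^2 / (1 + (max 0 t)^2) \<le> (max 0 t)^2"
    using pos by (simp add: divide_le_eq distrib_left)
  also have "\<dots> \<le> t^2" by (simp add: max_def)
  finally show "smooth_step t \<le> t^2" by (simp add: smooth_step_def)
qed

lemma continuous_on_smooth_step: "continuous_on UNIV smooth_step" "continuous_on UNIV smooth_step'"
  unfolding smooth_step_def smooth_step'_def
  by (auto intro!: continuous_intros simp: one_plus_square_pos[THEN less_imp_neq, symmetric])

lemma has_real_derivative_smooth_step: "(smooth_step has_real_derivative smooth_step' t) (at t)"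
proof -
  consider "t < 0" | "t = 0" | "t > 0" by linarith
  then show ?thesis
  proof cases
    case 1
    have "(smooth_step has_real_derivative 0) (at t)"
      by (rule has_field_derivative_transform_within_open[of "\<lambda>_. 0" _ _ "{..<0}"])
        (use 1 in \<open>auto simp: smooth_step_bounds\<close>)
    then show ?thesis using 1 by (simp add: smooth_step'_def)
  next
    case 3
    have "((\<lambda>t. t^2 / (1 + t^2)) has_real_derivative
        (2*t * (1 + t^2) - t^2 * (2*t)) / ((1 + t^2) * (1 + t^2))) (at t)"
      by (auto intro!: derivative_eq_intros simp: one_plus_square_pos[THEN less_imp_neq, symmetric])
    then have "(smooth_step has_real_derivative
        (2*t * (1 + t^2) - t^2 * (2*t)) / ((1 + t^2) * (1 + t^2))) (at t)"
      by (rule has_field_derivative_transform_within_open[of _ _ _ "{0<..}"])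
        (use 3 in \<open>auto simp: smooth_step_def\<close>)
    moreover have "(2*t * (1 + t^2) - t^2 * (2*t)) / ((1 + t^2) * (1 + t^2)) = smooth_step' t"
      using 3 by (simp add: smooth_step'_def algebra_simps power2_eq_square)
    ultimately show ?thesis by simp
  next
    case 2
    \<comment> \<open>\<open>0 \<le> smooth_step y \<le> y\<^sup>2\<close> squeezes the difference quotient at \<open>0\<close>\<close>
    have "((\<lambda>y. (smooth_step y - smooth_step 0) / (y - 0)) \<longlongrightarrow> 0) (at 0)"
    proof (rule Lim_null_comparison[where g="\<lambda>y. \<bar>y\<bar>"])
      have "norm ((smooth_step y - smooth_step 0) / (y - 0)) \<le> \<bar>y\<bar>" for y
        using smooth_step_bounds[of y] smooth_step_bounds(3)[of 0]
        by (cases "y = 0") (auto simp: abs_div divide_le_eq power2_eq_square)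
      then show "\<forall>\<^sub>F y in at 0. norm ((smooth_step y - smooth_step 0) / (y - 0)) \<le> \<bar>y\<bar>"
        by (simp add: always_eventually)
      show "((\<lambda>y. \<bar>y\<bar>) \<longlongrightarrow> 0) (at (0::real))"
        using tendsto_rabs[OF tendsto_ident_at[of 0 UNIV]] by simp
    qed
    then show ?thesis using 2 by (simp add: has_field_derivative_iff smooth_step'_def)
  qed
qed

lemma smooth_step_tendsto_1:
  assumes "c > 0"
  shows "(\<lambda>n. smooth_step (real n * c)) \<longlonglongrightarrow> 1"
proof -
  have eq: "smooth_step (real n * c) = 1 - 1 / (1 + (real n * c)^2)" for n
    using assms one_plus_square_pos[of "real n * c"] by (simp add: smooth_step_def field_simps)
  have "filterlim (\<lambda>n. real n * c) at_top sequentially"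
    by (rule filterlim_at_top_mult_tendsto_pos[OF tendsto_const assms filterlim_real_sequentially])
  then have "filterlim (\<lambda>n. 1 + (real n * c)^2) at_top sequentially"
    by (intro filterlim_tendsto_add_at_top[OF tendsto_const] filterlim_pow_at_top) auto
  then have "(\<lambda>n. 1 / (1 + (real n * c)^2)) \<longlonglongrightarrow> 0"
    by (intro tendsto_divide_0[OF tendsto_const] filterlim_at_top_imp_at_infinity)
  then have "(\<lambda>n. 1 - 1 / (1 + (real n * c)^2)) \<longlonglongrightarrow> 1 - 0"
    by (intro tendsto_diff tendsto_const)
  then show ?thesis by (simp add: eq)
qed

definition interval_bump :: "real \<Rightarrow> real \<Rightarrow> real \<Rightarrow> real \<Rightarrow> real" where
  "interval_bump n \<alpha> \<beta> s = smooth_step (n * (s - \<alpha>)) * smooth_step (n * (\<beta> - s))"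

definition interval_bump' :: "real \<Rightarrow> real \<Rightarrow> real \<Rightarrow> real \<Rightarrow> real" where
  "interval_bump' n \<alpha> \<beta> s =
     smooth_step' (n * (s - \<alpha>)) * n * smooth_step (n * (\<beta> - s))
     - smooth_step' (n * (\<beta> - s)) * n * smooth_step (n * (s - \<alpha>))"

lemma has_real_derivative_interval_bump:
  "(interval_bump n \<alpha> \<beta> has_real_derivative interval_bump' n \<alpha> \<beta> s) (at s)"
proof -
  have "((\<lambda>s. smooth_step (n * (s - \<alpha>))) has_real_derivative smooth_step' (n * (s - \<alpha>)) * n) (at s)"
    by (rule DERIV_chain2[OF has_real_derivative_smooth_step]) (auto intro!: derivative_eq_intros)
  moreover have "((\<lambda>s. smooth_step (n * (\<beta> - s))) has_real_derivative smooth_step' (n * (\<beta> - s)) * (- n)) (at s)"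
    by (rule DERIV_chain2[OF has_real_derivative_smooth_step]) (auto intro!: derivative_eq_intros)
  ultimately show ?thesis
    unfolding interval_bump_def[abs_def] interval_bump'_def
    by (auto intro: derivative_eq_intros simp: algebra_simps)
qed

lemma continuous_on_interval_bump:
  "continuous_on UNIV (interval_bump n \<alpha> \<beta>)" "continuous_on UNIV (interval_bump' n \<alpha> \<beta>)"
  unfolding interval_bump_def[abs_def] interval_bump'_def[abs_def]
  by (auto intro!: continuous_intros continuous_on_compose2[OF continuous_on_smooth_step(1)]
      continuous_on_compose2[OF continuous_on_smooth_step(2)])

lemma interval_bump_bounds:
  "0 \<le> interval_bump n \<alpha> \<beta> s" "interval_bump n \<alpha> \<beta> s \<le> 1"
  "0 \<le> n \<Longrightarrow> s \<notin> {\<alpha><..<\<beta>} \<Longrightarrow> interval_bump n \<alpha> \<beta> s = 0"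
proof -
  show "0 \<le> interval_bump n \<alpha> \<beta> s" "interval_bump n \<alpha> \<beta> s \<le> 1"
    unfolding interval_bump_def by (simp_all add: smooth_step_bounds mult_le_one)
  assume "0 \<le> n" "s \<notin> {\<alpha><..<\<beta>}"
  then have "n * (s - \<alpha>) \<le> 0 \<or> n * (\<beta> - s) \<le> 0"
    by (auto simp: mult_nonneg_nonpos)
  then show "interval_bump n \<alpha> \<beta> s = 0"
    unfolding interval_bump_def by (auto simp: smooth_step_bounds)
qed

lemma interval_bump_tendsto_indicator:
  "(\<lambda>k. interval_bump (real k) \<alpha> \<beta> s) \<longlonglongrightarrow> indicator {\<alpha><..<\<beta>} s"
proof (cases "s \<in> {\<alpha><..<\<beta>}")
  case True
  then have "(\<lambda>k. smooth_step (real k * (s - \<alpha>)) * smooth_step (real k * (\<beta> - s))) \<longlonglongrightarrow> 1 * 1"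
    by (intro tendsto_mult smooth_step_tendsto_1) auto
  then show ?thesis using True by (simp add: interval_bump_def)
qed (simp add: interval_bump_bounds(3))

definition box_bump :: "real \<Rightarrow> 'a::euclidean_space \<Rightarrow> 'a \<Rightarrow> 'a \<Rightarrow> real" where
  "box_bump n a b x = (\<Prod>i\<in>Basis. interval_bump n (a \<bullet> i) (b \<bullet> i) (x \<bullet> i))"

definition box_bump_grad :: "real \<Rightarrow> 'a::euclidean_space \<Rightarrow> 'a \<Rightarrow> 'a \<Rightarrow> 'a" where
  "box_bump_grad n a b x = (\<Sum>i\<in>Basis.
     (interval_bump' n (a \<bullet> i) (b \<bullet> i) (x \<bullet> i) *
      (\<Prod>j\<in>Basis - {i}. interval_bump n (a \<bullet> j) (b \<bullet> j) (x \<bullet> j))) *\<^sub>R i)"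

lemma has_derivative_box_bump:
  "(box_bump n a b has_derivative (\<lambda>h. box_bump_grad n a b x \<bullet> h)) (at x)"
proof -
  have "((\<lambda>x. interval_bump n (a \<bullet> i) (b \<bullet> i) (x \<bullet> i)) has_derivative
      (\<lambda>y. (y \<bullet> i) * interval_bump' n (a \<bullet> i) (b \<bullet> i) (x \<bullet> i))) (at x)" for i
    by (rule DERIV_compose_FDERIV[OF has_real_derivative_interval_bump])
      (simp add: bounded_linear_imp_has_derivative bounded_linear_inner_left)
  then have "(box_bump n a b has_derivative (\<lambda>y. \<Sum>i\<in>Basis. (y \<bullet> i) * interval_bump' n (a \<bullet> i) (b \<bullet> i) (x \<bullet> i) *
      (\<Prod>j\<in>Basis - {i}. interval_bump n (a \<bullet> j) (b \<bullet> j) (x \<bullet> j)))) (at x)"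
    unfolding box_bump_def[abs_def] by (rule has_derivative_prod)
  moreover have "(\<lambda>y. \<Sum>i\<in>Basis. (y \<bullet> i) * interval_bump' n (a \<bullet> i) (b \<bullet> i) (x \<bullet> i) *
      (\<Prod>j\<in>Basis - {i}. interval_bump n (a \<bullet> j) (b \<bullet> j) (x \<bullet> j))) = (\<lambda>h. box_bump_grad n a b x \<bullet> h)"
    unfolding box_bump_grad_def
    by (auto simp: inner_sum_left mult_ac intro!: ext sum.cong) (simp add: inner_commute)
  ultimately show ?thesis by simp
qed

lemma continuous_on_box_bump:
  "continuous_on UNIV (box_bump n a b)" "continuous_on UNIV (box_bump_grad n a b)"
proof -
  have "continuous_on UNIV (\<lambda>x. interval_bump n (a \<bullet> j) (b \<bullet> j) (x \<bullet> j))"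
    "continuous_on UNIV (\<lambda>x. interval_bump' n (a \<bullet> j) (b \<bullet> j) (x \<bullet> j))" for j
    by (auto intro!: continuous_on_compose2[OF continuous_on_interval_bump(1)]
        continuous_on_compose2[OF continuous_on_interval_bump(2)] continuous_intros)
  then show "continuous_on UNIV (box_bump n a b)" "continuous_on UNIV (box_bump_grad n a b)"
    unfolding box_bump_def[abs_def] box_bump_grad_def[abs_def] by (auto intro!: continuous_intros)
qed

lemma box_bump_bounds: "0 \<le> box_bump n a b x" "box_bump n a b x \<le> 1"
  unfolding box_bump_def by (auto intro!: prod_nonneg prod_le_1 simp: interval_bump_bounds)

lemma box_bump_eq_0:
  assumes "0 \<le> n" "x \<notin> box a b"
  shows "box_bump n a b x = 0"
proof -
  obtain i where i: "i \<in> Basis" "x \<bullet> i \<notin> {a \<bullet> i<..<b \<bullet> i}"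
    using assms(2) by (auto simp: mem_box)
  then have "interval_bump n (a \<bullet> i) (b \<bullet> i) (x \<bullet> i) = 0"
    using interval_bump_bounds(3) assms(1) by blast
  then show ?thesis unfolding box_bump_def using i by (intro prod_zero) auto
qed

lemma C1c_grad_box_bump:
  assumes "cbox a b \<subseteq> \<Omega>" "0 \<le> n"
  shows "C1c_grad \<Omega> (box_bump n a b) (box_bump_grad n a b)"
  unfolding C1c_grad_def
proof (intro conjI allI exI[of _ "cbox a b"] impI)
  show "x \<notin> cbox a b \<Longrightarrow> box_bump n a b x = 0" for x
    using box_bump_eq_0[OF assms(2), of x a b] box_subset_cbox[of a b] by blast
qed (use assms in \<open>auto simp: has_derivative_box_bump continuous_on_box_bump\<close>)

lemma box_bump_tendsto_indicator:
  "(\<lambda>k. box_bump (real k) a b x) \<longlonglongrightarrow> indicator (box a b) x"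
proof -
  have "(\<lambda>k. box_bump (real k) a b x) \<longlonglongrightarrow> (\<Prod>i\<in>Basis. indicator {a \<bullet> i<..<b \<bullet> i} (x \<bullet> i))"
    unfolding box_bump_def by (intro tendsto_prod interval_bump_tendsto_indicator)
  moreover have "(\<Prod>i\<in>Basis. indicator {a \<bullet> i<..<b \<bullet> i} (x \<bullet> i) :: real) = indicator (box a b) x"
    by (auto simp: indicator_def mem_box prod_zero)
  ultimately show ?thesis by simp
qed

lemma C1c_gradE:
  fixes \<phi> :: "'a::euclidean_space \<Rightarrow> real"
  assumes "C1c_grad \<Omega> \<phi> D\<phi>"
  obtains K B where "compact K" "K \<subseteq> \<Omega>" "\<And>x. x \<notin> K \<Longrightarrow> \<phi> x = 0" "\<And>x. x \<notin> K \<Longrightarrow> D\<phi> x = 0"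
    "continuous_on UNIV \<phi>" "continuous_on UNIV D\<phi>" "\<And>x. \<bar>\<phi> x\<bar> \<le> B" "\<And>x. norm (D\<phi> x) \<le> B"
    "\<And>x. (\<phi> has_derivative (\<lambda>h. D\<phi> x \<bullet> h)) (at x)"
proof -
  from assms obtain K where K: "compact K" "K \<subseteq> \<Omega>" "\<And>x. x \<notin> K \<Longrightarrow> \<phi> x = 0"
    and der: "\<And>x. (\<phi> has_derivative (\<lambda>h. D\<phi> x \<bullet> h)) (at x)" and cont_D: "continuous_on UNIV D\<phi>"
    unfolding C1c_grad_def by blast
  have cont: "continuous_on UNIV \<phi>"
    using der by (meson continuous_at_imp_continuous_on has_derivative_continuous)
  have D_eq_0: "D\<phi> x = 0" if "x \<notin> K" for x
  proof -
    have "open (- K)" using K(1) by (simp add: compact_imp_closed open_Compl)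
    then have "((\<lambda>_. 0::real) has_derivative (\<lambda>h. D\<phi> x \<bullet> h)) (at x)"
      using has_derivative_transform_within_open[OF der[of x], of "- K" "\<lambda>_. 0"] that K(3) by auto
    then have "(\<lambda>h. D\<phi> x \<bullet> h) = (\<lambda>h. 0)"
      using has_derivative_unique has_derivative_const by blast
    then show ?thesis by (metis inner_eq_zero_iff)
  qed
  have "bounded (\<phi> ` K)" "bounded (D\<phi> ` K)"
    using K(1) cont cont_D compact_continuous_image compact_imp_bounded continuous_on_subset
    by (metis subset_UNIV)+
  then obtain B1 B2 where B1: "\<And>x. x \<in> K \<Longrightarrow> \<bar>\<phi> x\<bar> \<le> B1" and B2: "\<And>x. x \<in> K \<Longrightarrow> norm (D\<phi> x) \<le> B2"
    unfolding bounded_iff by (metis image_eqI real_norm_def)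
  show ?thesis
  proof (rule that[of K "max (max B1 B2) 0"])
    show "\<bar>\<phi> x\<bar> \<le> max (max B1 B2) 0" for x
      using B1[of x] K(3)[of x] by (cases "x \<in> K") auto
    show "norm (D\<phi> x) \<le> max (max B1 B2) 0" for x
      using B2[of x] D_eq_0[of x] by (cases "x \<in> K") auto
  qed (use K D_eq_0 cont cont_D der in auto)
qed

lemma C1c_grad_diff:
  assumes "C1c_grad \<Omega> \<phi> D\<phi>" "C1c_grad \<Omega> \<psi> D\<psi>"
  shows "C1c_grad \<Omega> (\<lambda>x. \<phi> x - \<psi> x) (\<lambda>x. D\<phi> x - D\<psi> x)"
proof -
  obtain K1 where K1: "compact K1" "K1 \<subseteq> \<Omega>" "\<And>x. x \<notin> K1 \<Longrightarrow> \<phi> x = 0"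
    "continuous_on UNIV D\<phi>" "\<And>x. (\<phi> has_derivative (\<lambda>h. D\<phi> x \<bullet> h)) (at x)"
    using C1c_gradE[OF assms(1)] by metis
  obtain K2 where K2: "compact K2" "K2 \<subseteq> \<Omega>" "\<And>x. x \<notin> K2 \<Longrightarrow> \<psi> x = 0"
    "continuous_on UNIV D\<psi>" "\<And>x. (\<psi> has_derivative (\<lambda>h. D\<psi> x \<bullet> h)) (at x)"
    using C1c_gradE[OF assms(2)] by metis
  have "((\<lambda>x. \<phi> x - \<psi> x) has_derivative (\<lambda>h. (D\<phi> x - D\<psi> x) \<bullet> h)) (at x)" for x
    using has_derivative_diff[OF K1(5)[of x] K2(5)[of x]] by (simp add: inner_diff_left)
  then show ?thesis unfolding C1c_grad_def
  proof (intro conjI allI exI[of _ "K1 \<union> K2"] impI)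
    show "continuous_on UNIV (\<lambda>x. D\<phi> x - D\<psi> x)" using K1(4) K2(4) by (intro continuous_intros)
  qed (use K1 K2 in auto)
qed

lemma open_imp_sets_lebesgue: "open S \<Longrightarrow> S \<in> sets lebesgue"
  by (simp add: borel_open)

lemma borel_measurable_continuous_lebesgue_on:
  "continuous_on UNIV f \<Longrightarrow> S \<in> sets lebesgue \<Longrightarrow> f \<in> borel_measurable (lebesgue_on S)"
  by (rule continuous_imp_measurable_on_sets_lebesgue) (auto intro: continuous_on_subset)

lemma lebesgue_on_vanishing_outside:
  fixes g :: "'a::euclidean_space \<Rightarrow> 'b::{banach,second_countable_topology}"
  assumes "K \<in> sets lebesgue" "\<Omega> \<in> sets lebesgue" "K \<subseteq> \<Omega>" "\<And>x. x \<notin> K \<Longrightarrow> g x = 0"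
  shows "integrable (lebesgue_on \<Omega>) g \<longleftrightarrow> integrable (lebesgue_on K) g"
    "integral\<^sup>L (lebesgue_on \<Omega>) g = integral\<^sup>L (lebesgue_on K) g"
proof -
  have "(\<lambda>x. indicator \<Omega> x *\<^sub>R g x) = (\<lambda>x. indicator K x *\<^sub>R g x)"
  proof
    show "indicator \<Omega> x *\<^sub>R g x = indicator K x *\<^sub>R g x" for x
      using assms(3) assms(4)[of x] by (cases "x \<in> K") (auto simp: indicator_def)
  qed
  then show "integrable (lebesgue_on \<Omega>) g \<longleftrightarrow> integrable (lebesgue_on K) g"
    "integral\<^sup>L (lebesgue_on \<Omega>) g = integral\<^sup>L (lebesgue_on K) g"
    using assms(1,2) by (simp_all add: integrable_restrict_space integral_restrict_space)
qed

lemma C1c_grad_measurable: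
  assumes "open \<Omega>" "C1c_grad \<Omega> \<psi> D\<psi>"
  shows "\<psi> \<in> borel_measurable (lebesgue_on \<Omega>)" "D\<psi> \<in> borel_measurable (lebesgue_on \<Omega>)"
proof -
  have "\<Omega> \<in> sets lebesgue" using assms(1) by (simp add: borel_open)
  then show "\<psi> \<in> borel_measurable (lebesgue_on \<Omega>)" "D\<psi> \<in> borel_measurable (lebesgue_on \<Omega>)"
    using C1c_gradE[OF assms(2)] borel_measurable_continuous_lebesgue_on by metis+
qed

lemma C1c_grad_integrable_powr:
  fixes \<psi> :: "'a::euclidean_space \<Rightarrow> real"
  assumes "open \<Omega>" "C1c_grad \<Omega> \<psi> D\<psi>" "0 < p"
  shows "integrable (lebesgue_on \<Omega>) (\<lambda>x. \<bar>\<psi> x\<bar> powr p)"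
    "integrable (lebesgue_on \<Omega>) (\<lambda>x. norm (D\<psi> x) powr p)"
proof -
  obtain K B where K: "compact K" "K \<subseteq> \<Omega>" "\<And>x. x \<notin> K \<Longrightarrow> \<psi> x = 0" "\<And>x. x \<notin> K \<Longrightarrow> D\<psi> x = 0"
    "continuous_on UNIV \<psi>" "continuous_on UNIV D\<psi>" "\<And>x. \<bar>\<psi> x\<bar> \<le> B" "\<And>x. norm (D\<psi> x) \<le> B"
    using C1c_gradE[OF assms(2)] by metis
  interpret finite_measure "lebesgue_on K"
    using K(1) by (intro finite_measure_lebesgue_on lmeasurable_compact)
  have sets: "K \<in> sets lebesgue" "\<Omega> \<in> sets lebesgue"
    using K(1) assms(1) by (simp_all add: borel_compact borel_open)
  have meas: "\<psi> \<in> borel_measurable (lebesgue_on K)" "D\<psi> \<in> borel_measurable (lebesgue_on K)"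
    using K(5,6) sets(1) by (simp_all add: borel_measurable_continuous_lebesgue_on)
  have "integrable (lebesgue_on K) (\<lambda>x. \<bar>\<psi> x\<bar> powr p)"
  proof (rule integrable_const_bound[where B="B powr p"])
    show "AE x in lebesgue_on K. norm (\<bar>\<psi> x\<bar> powr p) \<le> B powr p"
      using K(7) assms(3) by (intro AE_I2) (simp add: powr_mono2)
  qed (use meas in measurable)
  then show "integrable (lebesgue_on \<Omega>) (\<lambda>x. \<bar>\<psi> x\<bar> powr p)"
    using lebesgue_on_vanishing_outside(1)[OF sets K(2), of "\<lambda>x. \<bar>\<psi> x\<bar> powr p"] K(3) by simp
  have "integrable (lebesgue_on K) (\<lambda>x. norm (D\<psi> x) powr p)"
  proof (rule integrable_const_bound[where B="B powr p"])
    show "AE x in lebesgue_on K. norm (norm (D\<psi> x) powr p) \<le> B powr p"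
      using K(8) assms(3) by (intro AE_I2) (simp add: powr_mono2)
  qed (use meas in measurable)
  then show "integrable (lebesgue_on \<Omega>) (\<lambda>x. norm (D\<psi> x) powr p)"
    using lebesgue_on_vanishing_outside(1)[OF sets K(2), of "\<lambda>x. norm (D\<psi> x) powr p"] K(4) by simp
qed

lemma integrable_mult_C1c_grad:
  fixes f :: "'a::euclidean_space \<Rightarrow> real"
  assumes "open \<Omega>" "locally_integrable_on \<Omega> f" "C1c_grad \<Omega> \<psi> D\<psi>"
  shows "integrable (lebesgue_on \<Omega>) (\<lambda>x. f x * \<psi> x)"
proof -
  obtain K B where K: "compact K" "K \<subseteq> \<Omega>" "\<And>x. x \<notin> K \<Longrightarrow> \<psi> x = 0"
    "continuous_on UNIV \<psi>" "\<And>x. \<bar>\<psi> x\<bar> \<le> B"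
    using C1c_gradE[OF assms(3)] by metis
  have sets: "K \<in> sets lebesgue" "\<Omega> \<in> sets lebesgue"
    using K(1) assms(1) by (simp_all add: borel_compact borel_open)
  have fK: "integrable (lebesgue_on K) f"
    using assms(2) K unfolding locally_integrable_on_def by blast
  have "integrable (lebesgue_on K) (\<lambda>x. f x * \<psi> x)"
  proof (rule Bochner_Integration.integrable_bound[of _ "\<lambda>x. B * f x"])
    show "(\<lambda>x. f x * \<psi> x) \<in> borel_measurable (lebesgue_on K)"
      using fK borel_measurable_continuous_lebesgue_on[OF K(4) sets(1)] by measurable
    have "\<bar>f x\<bar> * \<bar>\<psi> x\<bar> \<le> \<bar>f x\<bar> * B" for x
      using K(5)[of x] by (simp add: mult_left_mono)
    moreover have "0 \<le> B" using K(5) order_trans abs_ge_zero by blast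
    ultimately show "AE x in lebesgue_on K. norm (f x * \<psi> x) \<le> norm (B * f x)"
      by (intro AE_I2) (simp add: abs_mult mult.commute)
  qed (use fK in simp)
  then show ?thesis
    using lebesgue_on_vanishing_outside(1)[OF sets K(2), of "\<lambda>x. f x * \<psi> x"] K(3) by simp
qed

lemma locally_integrable_on_measurable:
  fixes f :: "'a::euclidean_space \<Rightarrow> 'b::{banach,second_countable_topology}"
  assumes "open \<Omega>" "locally_integrable_on \<Omega> f"
  shows "f \<in> borel_measurable (lebesgue_on \<Omega>)"
proof -
  obtain \<D> where D: "countable \<D>" "\<D> \<subseteq> Pow \<Omega>" "\<And>X. X \<in> \<D> \<Longrightarrow> \<exists>a b. X = cbox a b" "\<Union>\<D> = \<Omega>"
    using open_countable_Union_open_cbox[OF assms(1)] by metis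
  have \<Omega>: "\<Omega> \<in> sets lebesgue" using assms(1) by (simp add: borel_open)
  show ?thesis
  proof (rule measurable_piecewise_restrict[OF D(1)])
    fix X assume X: "X \<in> \<D>"
    then obtain a b where ab: "X = cbox a b" using D(3) by blast
    have sub: "X \<subseteq> \<Omega>" using X D(2) by blast
    have XL: "X \<in> sets lebesgue" using ab by simp
    then show "X \<inter> space (lebesgue_on \<Omega>) \<in> sets (lebesgue_on \<Omega>)"
      using sub \<Omega> by (simp add: sets_restrict_space_iff Int_absorb2)
    have "integrable (lebesgue_on X) f"
      using assms(2) sub ab unfolding locally_integrable_on_def by auto
    moreover have "restrict_space (lebesgue_on \<Omega>) X = lebesgue_on X"
      using restrict_restrict_space[of \<Omega> lebesgue X] sub \<Omega> XL by (simp add: Int_absorb1)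
    ultimately show "f \<in> borel_measurable (restrict_space (lebesgue_on \<Omega>) X)" by simp
  qed (use D(4) in auto)
qed

section \<open>Uniqueness of weak gradients\<close>

lemma integral_box_eq_0_if_test_integrals_0:
  fixes f :: "'a::euclidean_space \<Rightarrow> real"
  assumes "open \<Omega>" "locally_integrable_on \<Omega> f"
    and H: "\<And>\<psi> D\<psi>. C1c_grad \<Omega> \<psi> D\<psi> \<Longrightarrow> integral\<^sup>L (lebesgue_on \<Omega>) (\<lambda>x. f x * \<psi> x) = 0"
    and sub: "cbox a b \<subseteq> \<Omega>"
  shows "integral\<^sup>L lebesgue (\<lambda>x. indicator (box a b) x * f x) = 0"
proof -
  let ?C = "cbox a b"
  have fC: "integrable (lebesgue_on ?C) f" using assms(2) sub unfolding locally_integrable_on_def by auto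
  have Cl: "?C \<in> sets lebesgue" by simp
  have z: "integral\<^sup>L (lebesgue_on ?C) (\<lambda>x. f x * box_bump (real k) a b x) = 0" for k
  proof -
    have "integral\<^sup>L (lebesgue_on \<Omega>) (\<lambda>x. f x * box_bump (real k) a b x) = 0"
      by (rule H[OF C1c_grad_box_bump[OF sub]]) simp
    moreover have "integral\<^sup>L (lebesgue_on \<Omega>) (\<lambda>x. f x * box_bump (real k) a b x)
        = integral\<^sup>L (lebesgue_on ?C) (\<lambda>x. f x * box_bump (real k) a b x)"
    proof (rule lebesgue_on_vanishing_outside(2)[OF Cl open_imp_sets_lebesgue[OF assms(1)] sub])
      show "x \<notin> ?C \<Longrightarrow> f x * box_bump (real k) a b x = 0" for x
        using box_bump_eq_0[of "real k" x a b] box_subset_cbox[of a b] by auto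
    qed
    ultimately show ?thesis by simp
  qed
  have fm: "f \<in> borel_measurable (lebesgue_on ?C)" using fC by simp
  have bump_meas: "box_bump (real k) a b \<in> borel_measurable (lebesgue_on ?C)" for k
    by (rule borel_measurable_continuous_lebesgue_on[OF continuous_on_box_bump(1) Cl])
  have "(\<lambda>k. integral\<^sup>L (lebesgue_on ?C) (\<lambda>x. f x * box_bump (real k) a b x))
      \<longlonglongrightarrow> integral\<^sup>L (lebesgue_on ?C) (\<lambda>x. f x * indicator (box a b) x)"
  proof (rule integral_dominated_convergence[where w="\<lambda>x. \<bar>f x\<bar>"])
    show "(\<lambda>x. f x * indicator (box a b) x) \<in> borel_measurable (lebesgue_on ?C)"
      using fm by (intro borel_measurable_times borel_measurable_indicator') (auto simp: sets_restrict_space_iff)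
    show "(\<lambda>x. f x * box_bump (real k) a b x) \<in> borel_measurable (lebesgue_on ?C)" for k
      using fm bump_meas[of k] by (rule borel_measurable_times)
    show "integrable (lebesgue_on ?C) (\<lambda>x. \<bar>f x\<bar>)" using fC by simp
    show "AE x in lebesgue_on ?C. (\<lambda>k. f x * box_bump (real k) a b x) \<longlonglongrightarrow> f x * indicator (box a b) x"
      by (intro AE_I2 tendsto_mult tendsto_const box_bump_tendsto_indicator)
    show "AE x in lebesgue_on ?C. norm (f x * box_bump (real k) a b x) \<le> \<bar>f x\<bar>" for k
      using box_bump_bounds[of "real k" a b] by (intro AE_I2) (simp add: abs_mult mult_left_le)
  qed
  then have "integral\<^sup>L (lebesgue_on ?C) (\<lambda>x. f x * indicator (box a b) x) = 0"
    using z by (simp add: LIMSEQ_const_iff)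
  moreover have "integral\<^sup>L (lebesgue_on ?C) (\<lambda>x. f x * indicator (box a b) x)
      = integral\<^sup>L lebesgue (\<lambda>x. indicator (box a b) x * f x)"
  proof -
    have "integral\<^sup>L (lebesgue_on ?C) (\<lambda>x. f x * indicator (box a b) x)
        = integral\<^sup>L lebesgue (\<lambda>x. indicator ?C x *\<^sub>R (f x * indicator (box a b) x))"
      by (rule integral_restrict_space) simp
    also have "(\<lambda>x. indicator ?C x *\<^sub>R (f x * indicator (box a b) x)) = (\<lambda>x. indicator (box a b) x * f x)"
    proof (rule ext)
      fix x show "indicator ?C x *\<^sub>R (f x * indicator (box a b) x) = indicator (box a b) x * f x"
        using box_subset_cbox[of a b] by (cases "x \<in> box a b") (auto simp: indicator_def)
    qed
    finally show ?thesis .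
  qed
  ultimately show ?thesis by simp
qed

lemma set_integral_eq_0_if_box_integrals_0:
  fixes G :: "'a::euclidean_space \<Rightarrow> real"
  assumes G: "integrable lebesgue G"
    and box_integrals_0: "\<And>a b. integral\<^sup>L lebesgue (\<lambda>x. indicator (box a b) x * G x) = 0"
    and tot: "integral\<^sup>L lebesgue G = 0"
    and A: "A \<in> sets borel"
  shows "integral\<^sup>L lebesgue (\<lambda>x. indicator A x * G x) = 0"
proof -
  let ?G = "range (\<lambda>(a, b). box a b :: 'a set)"
  have sb: "sets borel = sigma_sets UNIV ?G"
    by (subst borel_eq_box) (simp add: sets_measure_of)
  have inG: "box \<alpha> \<beta> \<in> ?G" for \<alpha> \<beta> :: 'a
    by (rule image_eqI[where x="(\<alpha>,\<beta>)"]) auto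
  have ist: "Int_stable ?G"
    unfolding Int_stable_def
  proof (intro ballI)
    fix X Y assume "X \<in> ?G" "Y \<in> ?G"
    then obtain a b c d where "X = box a b" "Y = box c d" by auto
    then show "X \<inter> Y \<in> ?G" by (simp add: box_Int_box inG)
  qed
  from A have Ain: "A \<in> sigma_sets UNIV ?G" by (simp add: sb)
  show ?thesis
  proof (rule sigma_sets_induct_disjoint[OF ist _ Ain, where P="\<lambda>A. integral\<^sup>L lebesgue (\<lambda>x. indicator A x * G x) = 0"])
    show "?G \<subseteq> Pow UNIV" by auto
  next
    fix A assume "A \<in> ?G" then show "integral\<^sup>L lebesgue (\<lambda>x. indicator A x * G x) = 0" using box_integrals_0 by auto
  next
    show "integral\<^sup>L lebesgue (\<lambda>x. indicator {} x * G x) = 0" by simp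
  next
    fix A assume c1: "A \<in> sigma_sets UNIV ?G" and c2: "integral\<^sup>L lebesgue (\<lambda>x. indicator A x * G x) = 0"
    have Al: "A \<in> sets lebesgue" using c1 sb by simp
    have "integral\<^sup>L lebesgue (\<lambda>x. indicator (UNIV - A) x * G x)
        = integral\<^sup>L lebesgue (\<lambda>x. G x - indicator A x * G x)"
      by (rule Bochner_Integration.integral_cong) (auto simp: indicator_def)
    also have "\<dots> = integral\<^sup>L lebesgue G - integral\<^sup>L lebesgue (\<lambda>x. indicator A x * G x)"
      using G integrable_mult_indicator[OF Al G] by (intro Bochner_Integration.integral_diff) auto
    finally show "integral\<^sup>L lebesgue (\<lambda>x. indicator (UNIV - A) x * G x) = 0" using c2 tot by simp
  next
    fix A :: "nat \<Rightarrow> 'a set" assume u1: "disjoint_family A" and u2: "range A \<subseteq> sigma_sets UNIV ?G"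
      and u3: "\<And>i. integral\<^sup>L lebesgue (\<lambda>x. indicator (A i) x * G x) = 0"
    have "A i \<in> sets borel" for i using u2 by (auto simp: sb)
    then have Al: "A i \<in> sets lebesgue" for i by simp
    have "set_integrable lebesgue (\<Union>i. A i) G"
      unfolding set_integrable_def using Al G by (intro integrable_mult_indicator) auto
    then have "(LINT x:(\<Union>i. A i)|lebesgue. G x) = (\<Sum>i. (LINT x:(A i)|lebesgue. G x))"
      using u1 Al by (intro lebesgue_integral_countable_add) (auto simp: disjoint_family_on_def)
    then show "integral\<^sup>L lebesgue (\<lambda>x. indicator (\<Union>(range A)) x * G x) = 0"
      using u3 by (simp add: set_lebesgue_integral_def)
  qed
qed

lemma AE_eq_0_if_set_integrals_0:
  fixes G :: "'a::euclidean_space \<Rightarrow> real"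
  assumes G: "integrable lebesgue G"
    and set_integrals_0: "\<And>A. A \<in> sets borel \<Longrightarrow> integral\<^sup>L lebesgue (\<lambda>x. indicator A x * G x) = 0"
  shows "AE x in lebesgue. G x = 0"
proof (rule density_unique_real[where f'="\<lambda>x. 0", OF G])
  fix A :: "'a set" assume A: "A \<in> sets lebesgue"
  then obtain S N N' where SN: "A = S \<union> N" "N \<subseteq> N'" "N' \<in> null_sets lborel" "S \<in> sets lborel"
    by (rule sets_completionE)
  have "AE x in lebesgue. x \<notin> N'"
    using SN(3) by (intro AE_not_in null_sets_completionI)
  then have "AE x in lebesgue. indicator A x *\<^sub>R G x = indicator S x * G x"
    by eventually_elim (use SN(1,2) in \<open>auto simp: indicator_def\<close>)
  moreover have "S \<in> sets lebesgue"
    using SN(4) by simp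
  then have "(\<lambda>x. indicator A x *\<^sub>R G x) \<in> borel_measurable lebesgue"
    "(\<lambda>x. indicator S x * G x) \<in> borel_measurable lebesgue"
    using A G by measurable
  ultimately have "integral\<^sup>L lebesgue (\<lambda>x. indicator A x *\<^sub>R G x) = integral\<^sup>L lebesgue (\<lambda>x. indicator S x * G x)"
    by (intro integral_cong_AE)
  also have "\<dots> = 0"
    using set_integrals_0 SN(4) by simp
  finally show "set_lebesgue_integral lebesgue A G = set_lebesgue_integral lebesgue A (\<lambda>x. 0)"
    by (simp add: set_lebesgue_integral_def)
qed simp

lemma AE_cbox_eq_0_if_test_integrals_0:
  fixes f :: "'a::euclidean_space \<Rightarrow> real"
  assumes "open \<Omega>" "locally_integrable_on \<Omega> f"
    and H: "\<And>\<psi> D\<psi>. C1c_grad \<Omega> \<psi> D\<psi> \<Longrightarrow> integral\<^sup>L (lebesgue_on \<Omega>) (\<lambda>x. f x * \<psi> x) = 0"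
    and sub: "cbox c d \<subseteq> \<Omega>"
  shows "AE x in lebesgue. x \<in> cbox c d \<longrightarrow> f x = 0"
proof -
  define G where "G = (\<lambda>x. indicator (box c d) x * f x)"
  have fC: "integrable (lebesgue_on (cbox c d)) f"
    using assms(2) sub unfolding locally_integrable_on_def by auto
  have cs: "cbox c d \<inter> space lebesgue \<in> sets lebesgue" by simp
  have "integrable lebesgue (\<lambda>x. indicator (cbox c d) x *\<^sub>R f x)"
    using iffD1[OF integrable_restrict_space[OF cs, of f] fC] .
  then have "integrable lebesgue (\<lambda>x. indicator (box c d) x *\<^sub>R (indicator (cbox c d) x *\<^sub>R f x))"
    using integrable_mult_indicator[of "box c d" lebesgue "\<lambda>x. indicator (cbox c d) x *\<^sub>R f x"] by simp
  moreover have "(\<lambda>x. indicator (box c d) x *\<^sub>R (indicator (cbox c d) x *\<^sub>R f x)) = G"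
  proof (rule ext)
    fix x show "indicator (box c d) x *\<^sub>R (indicator (cbox c d) x *\<^sub>R f x) = G x"
      using box_subset_cbox[of c d] by (cases "x \<in> box c d") (auto simp: G_def indicator_def)
  qed
  ultimately have Gi: "integrable lebesgue G" by simp
  have box_integrals_0: "integral\<^sup>L lebesgue (\<lambda>x. indicator (box a b) x * G x) = 0" for a b
  proof -
    define a' where "a' = (\<Sum>i\<in>Basis. max (a\<bullet>i) (c\<bullet>i) *\<^sub>R i)"
    define b' where "b' = (\<Sum>i\<in>Basis. min (b\<bullet>i) (d\<bullet>i) *\<^sub>R i)"
    have "(\<lambda>x. indicator (box a b) x * G x) = (\<lambda>x. indicator (box a' b') x * f x)"
      unfolding G_def a'_def b'_def box_Int_box[symmetric] by (auto simp: indicator_def)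
    moreover have "cbox a' b' \<subseteq> cbox c d"
      unfolding a'_def b'_def by (auto simp: mem_box)
    then have "integral\<^sup>L lebesgue (\<lambda>x. indicator (box a' b') x * f x) = 0"
      using sub by (intro integral_box_eq_0_if_test_integrals_0[OF assms(1,2) H]) auto
    ultimately show ?thesis by simp
  qed
  have tot: "integral\<^sup>L lebesgue G = 0"
    unfolding G_def by (rule integral_box_eq_0_if_test_integrals_0[OF assms(1,2) H sub])
  have "AE x in lebesgue. G x = 0"
    by (rule AE_eq_0_if_set_integrals_0[OF Gi set_integral_eq_0_if_box_integrals_0[OF Gi box_integrals_0 tot]])
  moreover have "AE x in lebesgue. x \<notin> cbox c d - box c d"
    using negligible_frontier_interval[of c d] by (intro AE_not_in) (simp add: negligible_iff_null_sets)
  ultimately show ?thesis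
    by eventually_elim (auto simp: G_def indicator_def)
qed

lemma AE_eq_0_if_test_integrals_0:
  fixes f :: "'a::euclidean_space \<Rightarrow> real"
  assumes "open \<Omega>" "locally_integrable_on \<Omega> f"
    and H: "\<And>\<psi> D\<psi>. C1c_grad \<Omega> \<psi> D\<psi> \<Longrightarrow> integral\<^sup>L (lebesgue_on \<Omega>) (\<lambda>x. f x * \<psi> x) = 0"
  shows "AE x in lebesgue_on \<Omega>. f x = 0"
proof -
  obtain \<D> where D: "countable \<D>" "\<D> \<subseteq> Pow \<Omega>" "\<And>X. X \<in> \<D> \<Longrightarrow> \<exists>a b. X = cbox a b" "\<Union>\<D> = \<Omega>"
    using open_countable_Union_open_cbox[OF assms(1)] by metis
  have cbox_AE: "AE x in lebesgue. x \<in> X \<longrightarrow> f x = 0" if X: "X \<in> \<D>" for X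
  proof -
    obtain c d where X_eq: "X = cbox c d" using D(3) X by blast
    then have "cbox c d \<subseteq> \<Omega>" using X D(2) by auto
    then show ?thesis
      using AE_cbox_eq_0_if_test_integrals_0[OF assms(1,2) H] X_eq by simp
  qed
  have "AE x in lebesgue. \<forall>X\<in>\<D>. x \<in> X \<longrightarrow> f x = 0"
    using cbox_AE D(1) by (subst AE_ball_countable) auto
  then have "AE x in lebesgue. x \<in> \<Omega> \<longrightarrow> f x = 0"
    by eventually_elim (use D(4) in auto)
  then show ?thesis
    using open_imp_sets_lebesgue[OF assms(1)] by (subst AE_restrict_space_iff) auto
qed

lemma locally_integrable_on_inner:
  fixes g :: "'a::euclidean_space \<Rightarrow> 'a"
  assumes "locally_integrable_on \<Omega> g"
  shows "locally_integrable_on \<Omega> (\<lambda>x. g x \<bullet> i)"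
  using assms unfolding locally_integrable_on_def by auto

lemma locally_integrable_on_diff:
  fixes f g :: "'a::euclidean_space \<Rightarrow> real"
  assumes "locally_integrable_on \<Omega> f" "locally_integrable_on \<Omega> g"
  shows "locally_integrable_on \<Omega> (\<lambda>x. f x - g x)"
  using assms unfolding locally_integrable_on_def by auto

lemma weak_gradient_unique:
  fixes u :: "'a::euclidean_space \<Rightarrow> real"
  assumes "open \<Omega>" "weak_gradient \<Omega> u g" "weak_gradient \<Omega> u g'"
  shows "AE x in lebesgue_on \<Omega>. g x = g' x"
proof -
  have lg: "locally_integrable_on \<Omega> g" and lg': "locally_integrable_on \<Omega> g'"
    using assms(2,3) unfolding weak_gradient_def by auto
  have comp: "AE x in lebesgue_on \<Omega>. (g x \<bullet> i) - (g' x \<bullet> i) = 0" if i: "i \<in> Basis" for i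
  proof (rule AE_eq_0_if_test_integrals_0[OF assms(1) locally_integrable_on_diff[OF locally_integrable_on_inner[OF lg] locally_integrable_on_inner[OF lg']]])
    fix \<psi> D\<psi> assume C: "C1c_grad \<Omega> \<psi> D\<psi>"
    have i1: "integrable (lebesgue_on \<Omega>) (\<lambda>x. (g x \<bullet> i) * \<psi> x)"
      by (rule integrable_mult_C1c_grad[OF assms(1) locally_integrable_on_inner[OF lg] C])
    have i2: "integrable (lebesgue_on \<Omega>) (\<lambda>x. (g' x \<bullet> i) * \<psi> x)"
      by (rule integrable_mult_C1c_grad[OF assms(1) locally_integrable_on_inner[OF lg'] C])
    have e1: "integral\<^sup>L (lebesgue_on \<Omega>) (\<lambda>x. u x * (D\<psi> x \<bullet> i)) = - integral\<^sup>L (lebesgue_on \<Omega>) (\<lambda>x. (g x \<bullet> i) * \<psi> x)"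
      using assms(2) C i unfolding weak_gradient_def by blast
    have e2: "integral\<^sup>L (lebesgue_on \<Omega>) (\<lambda>x. u x * (D\<psi> x \<bullet> i)) = - integral\<^sup>L (lebesgue_on \<Omega>) (\<lambda>x. (g' x \<bullet> i) * \<psi> x)"
      using assms(3) C i unfolding weak_gradient_def by blast
    have "integral\<^sup>L (lebesgue_on \<Omega>) (\<lambda>x. ((g x \<bullet> i) - (g' x \<bullet> i)) * \<psi> x)
        = integral\<^sup>L (lebesgue_on \<Omega>) (\<lambda>x. (g x \<bullet> i) * \<psi> x - (g' x \<bullet> i) * \<psi> x)"
      by (simp add: left_diff_distrib)
    also have "\<dots> = integral\<^sup>L (lebesgue_on \<Omega>) (\<lambda>x. (g x \<bullet> i) * \<psi> x) - integral\<^sup>L (lebesgue_on \<Omega>) (\<lambda>x. (g' x \<bullet> i) * \<psi> x)"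
      by (rule Bochner_Integration.integral_diff[OF i1 i2])
    also have "\<dots> = 0" using e1 e2 by simp
    finally show "integral\<^sup>L (lebesgue_on \<Omega>) (\<lambda>x. ((g x \<bullet> i) - (g' x \<bullet> i)) * \<psi> x) = 0" .
  qed
  have "AE x in lebesgue_on \<Omega>. \<forall>i\<in>Basis. (g x \<bullet> i) - (g' x \<bullet> i) = 0"
    using comp by (subst AE_ball_countable) (auto intro: countable_finite)
  then show ?thesis
    by eventually_elim (auto intro: euclidean_eqI simp: inner_diff_left)
qed

lemma weak_gradient_measurable:
  assumes "open \<Omega>" "weak_gradient \<Omega> u g"
  shows "g \<in> borel_measurable (lebesgue_on \<Omega>)"
  using assms locally_integrable_on_measurable unfolding weak_gradient_def by blast

lemma integral_norm_powr_inner_weak_gradients: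
  assumes "open \<Omega>"
    and "weak_gradient \<Omega> u g" "weak_gradient \<Omega> u g'" "weak_gradient \<Omega> \<phi> h" "weak_gradient \<Omega> \<phi> h'"
  shows "integral\<^sup>L (lebesgue_on \<Omega>) (\<lambda>x. norm (g x) powr (p - 2) * (g x \<bullet> h x))
    = integral\<^sup>L (lebesgue_on \<Omega>) (\<lambda>x. norm (g' x) powr (p - 2) * (g' x \<bullet> h' x))"
proof (rule integral_cong_AE)
  show "AE x in lebesgue_on \<Omega>. norm (g x) powr (p - 2) * (g x \<bullet> h x) = norm (g' x) powr (p - 2) * (g' x \<bullet> h' x)"
    using weak_gradient_unique[OF assms(1,2,3)] weak_gradient_unique[OF assms(1,4,5)]
    by eventually_elim simp
  have "g \<in> borel_measurable (lebesgue_on \<Omega>)" "g' \<in> borel_measurable (lebesgue_on \<Omega>)"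
    "h \<in> borel_measurable (lebesgue_on \<Omega>)" "h' \<in> borel_measurable (lebesgue_on \<Omega>)"
    using weak_gradient_measurable[OF assms(1)] assms(2-5) by blast+
  then show "(\<lambda>x. norm (g x) powr (p - 2) * (g x \<bullet> h x)) \<in> borel_measurable (lebesgue_on \<Omega>)"
    "(\<lambda>x. norm (g' x) powr (p - 2) * (g' x \<bullet> h' x)) \<in> borel_measurable (lebesgue_on \<Omega>)"
    by measurable
qed

lemma powr_minus_one_mult_le:
  fixes x y \<epsilon> p :: real
  assumes "1 \<le> p" "0 \<le> x" "0 \<le> y" "0 < \<epsilon>"
  shows "x powr (p - 1) * y \<le> \<epsilon> * x powr p + \<epsilon> powr (1 - p) * y powr p"
proof (cases "y \<le> \<epsilon> * x")
  case True
  have "x powr (p - 1) * y \<le> x powr (p - 1) * (\<epsilon> * x)"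
    using True by (intro mult_left_mono) auto
  also have "\<dots> = \<epsilon> * x powr p"
    using powr_add[of x "p - 1" 1] assms(2) by (cases "x = 0") (auto simp: mult_ac)
  finally show ?thesis
    using mult_nonneg_nonneg[OF powr_ge_zero powr_ge_zero, of \<epsilon> "1 - p" y p] by linarith
next
  case False
  have y: "0 < y"
    using False assms(2,4) mult_nonneg_nonneg[of \<epsilon> x] by linarith
  have "x \<le> y / \<epsilon>"
    using False assms(4) by (simp add: le_divide_eq mult.commute)
  then have "x powr (p - 1) * y \<le> (y / \<epsilon>) powr (p - 1) * y"
    using assms by (intro mult_right_mono powr_mono2) auto
  also have "(y / \<epsilon>) powr (p - 1) = \<epsilon> powr (1 - p) * y powr (p - 1)"
    using y assms(4) powr_minus_divide[of \<epsilon> "p - 1"] by (simp add: powr_divide)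
  also have "\<dots> * y = \<epsilon> powr (1 - p) * (y powr (p - 1) * y powr 1)"
    using y by simp
  also have "\<dots> = \<epsilon> powr (1 - p) * y powr p"
    using powr_add[of y "p - 1" 1] by simp
  finally show ?thesis
    using mult_nonneg_nonneg[OF less_imp_le[OF assms(4)] powr_ge_zero, of x p] by linarith
qed

lemma abs_norm_powr_inner_le:
  fixes w v :: "'a::real_inner"
  shows "\<bar>norm w powr (p - 2) * (w \<bullet> v)\<bar> \<le> norm w powr (p - 1) * norm v"
proof (cases "w = 0")
  case False
  have "\<bar>norm w powr (p - 2) * (w \<bullet> v)\<bar> \<le> norm w powr (p - 2) * (norm w * norm v)"
    by (simp add: abs_mult mult_left_mono Cauchy_Schwarz_ineq2)
  also have "\<dots> = (norm w powr (p - 2) * norm w powr 1) * norm v"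
    using False by simp
  also have "norm w powr (p - 2) * norm w powr 1 = norm w powr (p - 1)"
    using powr_add[of "norm w" "p - 2" 1] by simp
  finally show ?thesis .
qed simp

lemma abs_norm_powr_inner_le_eps:
  fixes w v :: "'a::real_inner"
  assumes "1 \<le> p" "0 < \<epsilon>"
  shows "\<bar>norm w powr (p - 2) * (w \<bullet> v)\<bar> \<le> \<epsilon> * norm w powr p + \<epsilon> powr (1 - p) * norm v powr p"
  using abs_norm_powr_inner_le[of w p v]
    powr_minus_one_mult_le[OF assms(1) norm_ge_zero norm_ge_zero assms(2), of w v] by linarith

lemma powr_add_le:
  fixes a b p :: real
  assumes "1 \<le> p" "0 \<le> a" "0 \<le> b"
  shows "(a + b) powr p \<le> 2 powr (p - 1) * (a powr p + b powr p)"
proof (cases "a = 0 \<or> b = 0")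
  case True
  have "1 \<le> 2 powr (p - 1)" using assms(1) by (intro ge_one_powr_ge_zero) auto
  then show ?thesis
    using True mult_right_mono[of 1 "2 powr (p - 1)" "a powr p"] mult_right_mono[of 1 "2 powr (p - 1)" "b powr p"]
    by auto
next
  case False
  have "((1 - 1/2) *\<^sub>R a + (1/2) *\<^sub>R b) powr p \<le> (1 - 1/2) * a powr p + (1/2) * b powr p"
    using convex_onD[OF powr_convex[OF assms(1)], of "1/2" a b] assms False by simp
  then have "((a + b) / 2) powr p \<le> (a powr p + b powr p) / 2"
    by (simp add: field_simps)
  moreover have "((a + b) / 2) powr p = (a + b) powr p / (2 * 2 powr (p - 1))"
    using assms by (simp add: powr_divide powr_diff)
  ultimately show ?thesis by (simp add: divide_le_eq field_simps)
qed

lemma norm_diff_powr_le: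
  fixes x y :: "'b::real_normed_vector"
  assumes "1 \<le> p"
  shows "norm (x - y) powr p \<le> 2 powr (p - 1) * (norm x powr p + norm y powr p)"
proof -
  have "norm (x - y) powr p \<le> (norm x + norm y) powr p"
    using assms by (intro powr_mono2) (auto simp: norm_triangle_ineq4)
  also have "\<dots> \<le> 2 powr (p - 1) * (norm x powr p + norm y powr p)"
    using assms by (intro powr_add_le) auto
  finally show ?thesis .
qed

lemma integrable_norm_diff_powr:
  fixes a b :: "'a \<Rightarrow> 'b::{banach,second_countable_topology}"
  assumes "1 \<le> p" "a \<in> borel_measurable M" "b \<in> borel_measurable M"
    "integrable M (\<lambda>x. norm (a x) powr p)" "integrable M (\<lambda>x. norm (b x) powr p)"
  shows "integrable M (\<lambda>x. norm (a x - b x) powr p)"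
proof (rule Bochner_Integration.integrable_bound)
  show "integrable M (\<lambda>x. 2 powr (p - 1) * (norm (a x) powr p + norm (b x) powr p))"
    using assms(4,5) by simp
  show "AE x in M. norm (norm (a x - b x) powr p) \<le> norm (2 powr (p - 1) * (norm (a x) powr p + norm (b x) powr p))"
    using norm_diff_powr_le[OF assms(1)] by (intro AE_I2) simp
qed (use assms(2,3) in measurable)

lemma integral_norm_powr_le:
  fixes a b :: "'a \<Rightarrow> 'b::{banach,second_countable_topology}"
  assumes "1 \<le> p" "a \<in> borel_measurable M" "b \<in> borel_measurable M"
    "integrable M (\<lambda>x. norm (a x) powr p)" "integrable M (\<lambda>x. norm (b x) powr p)"
  shows "integral\<^sup>L M (\<lambda>x. norm (a x) powr p)
    \<le> 2 powr (p - 1) * (integral\<^sup>L M (\<lambda>x. norm (a x - b x) powr p) + integral\<^sup>L M (\<lambda>x. norm (b x) powr p))"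
proof -
  have diff: "integrable M (\<lambda>x. norm (a x - b x) powr p)"
    by (rule integrable_norm_diff_powr[OF assms])
  have "integral\<^sup>L M (\<lambda>x. norm (a x) powr p)
      \<le> integral\<^sup>L M (\<lambda>x. 2 powr (p - 1) * (norm (a x - b x) powr p + norm (- b x) powr p))"
    using norm_diff_powr_le[OF assms(1), of "a x - b x" "- b x" for x] diff assms(5)
    by (intro integral_mono assms(4)) auto
  then show ?thesis
    using diff assms(5) by (simp add: Bochner_Integration.integral_add)
qed

lemma integrable_norm_powr_inner:
  fixes g v :: "'a \<Rightarrow> 'b::euclidean_space"
  assumes "1 \<le> p"
    and "g \<in> borel_measurable M" "integrable M (\<lambda>x. norm (g x) powr p)"
    and "v \<in> borel_measurable M" "integrable M (\<lambda>x. norm (v x) powr p)"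
  shows "integrable M (\<lambda>x. norm (g x) powr (p - 2) * (g x \<bullet> v x))"
proof (rule Bochner_Integration.integrable_bound)
  show "integrable M (\<lambda>x. 1 * norm (g x) powr p + 1 powr (1 - p) * norm (v x) powr p)"
    using assms(3,5) by simp
  show "AE x in M. norm (norm (g x) powr (p - 2) * (g x \<bullet> v x))
      \<le> norm (1 * norm (g x) powr p + 1 powr (1 - p) * norm (v x) powr p)"
    using abs_norm_powr_inner_le_eps[OF assms(1) zero_less_one] by (intro AE_I2) simp
qed (use assms(2,4) in measurable)

lemma abs_integral_norm_powr_inner_le:
  fixes g v :: "'a \<Rightarrow> 'b::euclidean_space"
  assumes "1 \<le> p" "0 < \<epsilon>"
    and "g \<in> borel_measurable M" "integrable M (\<lambda>x. norm (g x) powr p)"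
    and "v \<in> borel_measurable M" "integrable M (\<lambda>x. norm (v x) powr p)"
  shows "\<bar>integral\<^sup>L M (\<lambda>x. norm (g x) powr (p - 2) * (g x \<bullet> v x))\<bar>
    \<le> \<epsilon> * integral\<^sup>L M (\<lambda>x. norm (g x) powr p) + \<epsilon> powr (1 - p) * integral\<^sup>L M (\<lambda>x. norm (v x) powr p)"
proof -
  have "\<bar>integral\<^sup>L M (\<lambda>x. norm (g x) powr (p - 2) * (g x \<bullet> v x))\<bar>
      \<le> integral\<^sup>L M (\<lambda>x. \<bar>norm (g x) powr (p - 2) * (g x \<bullet> v x)\<bar>)"
    by (rule integral_abs_bound)
  also have "\<dots> \<le> integral\<^sup>L M (\<lambda>x. \<epsilon> * norm (g x) powr p + \<epsilon> powr (1 - p) * norm (v x) powr p)"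
    using abs_norm_powr_inner_le_eps[OF assms(1,2)] integrable_norm_powr_inner[OF assms(1,3-6)] assms(4,6)
    by (intro integral_mono) auto
  also have "\<dots> = \<epsilon> * integral\<^sup>L M (\<lambda>x. norm (g x) powr p) + \<epsilon> powr (1 - p) * integral\<^sup>L M (\<lambda>x. norm (v x) powr p)"
    using assms(4,6) by (simp add: Bochner_Integration.integral_add)
  finally show ?thesis .
qed

lemma tendsto_zero_by_eps_bound:
  fixes a b :: "nat \<Rightarrow> real"
  assumes bound: "\<And>\<epsilon> k. 0 < \<epsilon> \<Longrightarrow> \<bar>a k\<bar> \<le> \<epsilon> * A + c \<epsilon> * b k" and b: "b \<longlonglongrightarrow> 0"
  shows "a \<longlonglongrightarrow> 0"
proof (rule LIMSEQ_I)
  fix \<eta> :: real assume \<eta>: "0 < \<eta>"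
  define \<epsilon> where "\<epsilon> = \<eta> / (2 * (\<bar>A\<bar> + 1))"
  have \<epsilon>: "0 < \<epsilon>" "\<epsilon> * A < \<eta> / 2"
    using \<eta> by (auto simp: \<epsilon>_def field_simps abs_if)
  have "(\<lambda>k. c \<epsilon> * b k) \<longlonglongrightarrow> c \<epsilon> * 0"
    by (intro tendsto_mult tendsto_const b)
  then obtain N where N: "\<And>k. k \<ge> N \<Longrightarrow> \<bar>c \<epsilon> * b k\<bar> < \<eta> / 2"
    using \<eta> unfolding LIMSEQ_def dist_real_def by (metis half_gt_zero diff_zero mult_zero_right)
  show "\<exists>N. \<forall>k\<ge>N. norm (a k - 0) < \<eta>"
  proof (intro exI allI impI)
    fix k assume "N \<le> k"
    then show "norm (a k - 0) < \<eta>"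
      using bound[OF \<epsilon>(1), of k] \<epsilon>(2) N[of k] abs_ge_self[of "c \<epsilon> * b k"] by simp
  qed
qed

lemma tendsto_integral_norm_powr_inner:
  fixes g :: "'a \<Rightarrow> 'b::euclidean_space"
  assumes "1 \<le> p"
    and g: "g \<in> borel_measurable M" "integrable M (\<lambda>x. norm (g x) powr p)"
    and vs: "\<And>k. vs k \<in> borel_measurable M" "\<And>k. integrable M (\<lambda>x. norm (vs k x) powr p)"
    and v: "v \<in> borel_measurable M" "integrable M (\<lambda>x. norm (v x) powr p)"
    and lim: "(\<lambda>k. integral\<^sup>L M (\<lambda>x. norm (vs k x - v x) powr p)) \<longlonglongrightarrow> 0"
  shows "(\<lambda>k. integral\<^sup>L M (\<lambda>x. norm (g x) powr (p - 2) * (g x \<bullet> vs k x)))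
    \<longlonglongrightarrow> integral\<^sup>L M (\<lambda>x. norm (g x) powr (p - 2) * (g x \<bullet> v x))"
proof -
  have "(\<lambda>k. integral\<^sup>L M (\<lambda>x. norm (g x) powr (p - 2) * (g x \<bullet> vs k x))
      - integral\<^sup>L M (\<lambda>x. norm (g x) powr (p - 2) * (g x \<bullet> v x))) \<longlonglongrightarrow> 0"
  proof (rule tendsto_zero_by_eps_bound[OF _ lim])
    fix \<epsilon> :: real and k assume \<epsilon>: "0 < \<epsilon>"
    have diff: "(\<lambda>x. vs k x - v x) \<in> borel_measurable M" "integrable M (\<lambda>x. norm (vs k x - v x) powr p)"
      using vs v integrable_norm_diff_powr[OF assms(1) vs(1) v(1) vs(2) v(2)] by auto
    have "integral\<^sup>L M (\<lambda>x. norm (g x) powr (p - 2) * (g x \<bullet> vs k x))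
        - integral\<^sup>L M (\<lambda>x. norm (g x) powr (p - 2) * (g x \<bullet> v x))
        = integral\<^sup>L M (\<lambda>x. norm (g x) powr (p - 2) * (g x \<bullet> (vs k x - v x)))"
      using integrable_norm_powr_inner[OF assms(1) g] vs v
      by (simp add: inner_diff_right right_diff_distrib Bochner_Integration.integral_diff)
    then show "\<bar>integral\<^sup>L M (\<lambda>x. norm (g x) powr (p - 2) * (g x \<bullet> vs k x))
        - integral\<^sup>L M (\<lambda>x. norm (g x) powr (p - 2) * (g x \<bullet> v x))\<bar>
      \<le> \<epsilon> * integral\<^sup>L M (\<lambda>x. norm (g x) powr p)
        + \<epsilon> powr (1 - p) * integral\<^sup>L M (\<lambda>x. norm (vs k x - v x) powr p)"
      using abs_integral_norm_powr_inner_le[OF assms(1) \<epsilon> g diff] by simp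
  qed
  then show ?thesis by (simp add: LIM_zero_iff)
qed

lemma Fatou_integral_le:
  fixes u :: "nat \<Rightarrow> 'a \<Rightarrow> real"
  assumes u: "\<And>k. integrable M (u k)" "\<And>k. AE x in M. 0 \<le> u k x"
    and lim: "AE x in M. (\<lambda>k. u k x) \<longlonglongrightarrow> v x" and v: "v \<in> borel_measurable M"
    and bound: "\<And>k. integral\<^sup>L M (u k) \<le> b k" and b: "b \<longlonglongrightarrow> B"
  shows "integrable M v" "integral\<^sup>L M v \<le> B"
proof -
  have "AE x in M. \<forall>k. 0 \<le> u k x"
    using u(2) by (simp add: AE_all_countable)
  with lim have v_nonneg: "AE x in M. 0 \<le> v x"
    by eventually_elim (rule LIMSEQ_le_const, auto)
  have "B \<ge> 0"
    using integral_nonneg_AE[OF u(2)] bound by (intro LIMSEQ_le_const[OF b]) (auto intro: order_trans)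
  have "AE x in M. ennreal (v x) = liminf (\<lambda>k. ennreal (u k x))"
    using lim
  proof eventually_elim
    case (elim x)
    show ?case
      using lim_imp_Liminf[OF trivial_limit_sequentially tendsto_ennrealI[OF elim]] by simp
  qed
  then have "(\<integral>\<^sup>+ x. ennreal (v x) \<partial>M) = (\<integral>\<^sup>+ x. liminf (\<lambda>k. ennreal (u k x)) \<partial>M)"
    by (rule nn_integral_cong_AE)
  also have "\<dots> \<le> liminf (\<lambda>k. \<integral>\<^sup>+ x. ennreal (u k x) \<partial>M)"
    using borel_measurable_integrable[OF u(1)] by (intro nn_integral_liminf) measurable
  also have "\<dots> \<le> liminf (\<lambda>k. ennreal (b k))"
    using nn_integral_eq_integral[OF u] bound by (intro Liminf_mono always_eventually) (auto intro: ennreal_leI)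
  also have "\<dots> = ennreal B"
    using b by (intro lim_imp_Liminf tendsto_ennrealI) auto
  finally have le: "(\<integral>\<^sup>+ x. ennreal (v x) \<partial>M) \<le> ennreal B" .
  show int: "integrable M v"
    using v v_nonneg le by (intro integrableI_nonneg) (auto simp: order_le_less_trans)
  show "integral\<^sup>L M v \<le> B"
    using le nn_integral_eq_integral[OF int v_nonneg] \<open>B \<ge> 0\<close> by (simp add: ennreal_le_iff)
qed

section \<open>Testing with the absolute value\<close>

lemma smooth_abs_bounds:
  fixes a e :: real
  assumes "0 < e"
  shows "0 \<le> sqrt (a^2 + e^2) - e" "\<bar>(sqrt (a^2 + e^2) - e) - \<bar>a\<bar>\<bar> \<le> e"
    "\<bar>a / sqrt (a^2 + e^2)\<bar> \<le> 1"
proof -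
  have e_le: "e \<le> sqrt (a^2 + e^2)"
    using real_sqrt_le_mono[of "e^2" "a^2 + e^2"] assms by simp
  have abs_le: "\<bar>a\<bar> \<le> sqrt (a^2 + e^2)"
    using real_sqrt_le_mono[of "a^2" "a^2 + e^2"] by simp
  have "sqrt (a^2 + e^2) \<le> sqrt ((\<bar>a\<bar> + e)^2)"
    using assms by (intro real_sqrt_le_mono) (simp add: power2_eq_square algebra_simps)
  also have "\<dots> = \<bar>a\<bar> + e"
    using assms by simp
  finally have upper: "sqrt (a^2 + e^2) \<le> \<bar>a\<bar> + e" .
  show "0 \<le> sqrt (a^2 + e^2) - e" "\<bar>(sqrt (a^2 + e^2) - e) - \<bar>a\<bar>\<bar> \<le> e"
    using e_le abs_le upper by linarith+
  have "0 < sqrt (a^2 + e^2)"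
    using e_le assms by linarith
  then show "\<bar>a / sqrt (a^2 + e^2)\<bar> \<le> 1"
    using abs_le by (simp add: abs_div divide_le_eq)
qed

lemma C1c_grad_smooth_abs:
  assumes C: "C1c_grad \<Omega> \<psi> D\<psi>" and e: "0 < e"
  shows "C1c_grad \<Omega> (\<lambda>x. sqrt ((\<psi> x)^2 + e^2) - e) (\<lambda>x. (\<psi> x / sqrt ((\<psi> x)^2 + e^2)) *\<^sub>R D\<psi> x)"
proof -
  obtain K B where K: "compact K" "K \<subseteq> \<Omega>" "\<And>x. x \<notin> K \<Longrightarrow> \<psi> x = 0"
    "continuous_on UNIV \<psi>" "continuous_on UNIV D\<psi>" "\<And>x. (\<psi> has_derivative (\<lambda>h. D\<psi> x \<bullet> h)) (at x)"
    using C1c_gradE[OF C] by metis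
  have pos: "0 < (y::real)^2 + e^2" for y
    using e by (simp add: add_nonneg_pos)
  have sqrt_deriv: "((\<lambda>y. sqrt (y^2 + e^2)) has_real_derivative y / sqrt (y^2 + e^2)) (at y)" for y
    using pos[of y] by (auto intro!: derivative_eq_intros simp: field_simps)
  have der: "((\<lambda>x. sqrt ((\<psi> x)^2 + e^2) - e) has_derivative
      (\<lambda>h. ((\<psi> x / sqrt ((\<psi> x)^2 + e^2)) *\<^sub>R D\<psi> x) \<bullet> h)) (at x)" for x
  proof -
    have "((\<lambda>x. sqrt ((\<psi> x)^2 + e^2) - e) has_derivative
        (\<lambda>h. (D\<psi> x \<bullet> h) * (\<psi> x / sqrt ((\<psi> x)^2 + e^2)) - 0)) (at x)"
      by (intro has_derivative_diff has_derivative_const DERIV_compose_FDERIV[OF sqrt_deriv K(6)])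
    moreover have "(\<lambda>h. (D\<psi> x \<bullet> h) * (\<psi> x / sqrt ((\<psi> x)^2 + e^2)) - 0)
        = (\<lambda>h. ((\<psi> x / sqrt ((\<psi> x)^2 + e^2)) *\<^sub>R D\<psi> x) \<bullet> h)"
      by (simp add: mult.commute)
    ultimately show ?thesis by simp
  qed
  have cont: "continuous_on UNIV (\<lambda>x. (\<psi> x / sqrt ((\<psi> x)^2 + e^2)) *\<^sub>R D\<psi> x)"
    using K(4,5) pos by (intro continuous_intros) (auto simp: less_imp_neq[symmetric])
  show ?thesis
    unfolding C1c_grad_def
  proof (intro conjI allI exI[of _ K] impI der cont)
    show "x \<notin> K \<Longrightarrow> sqrt ((\<psi> x)^2 + e^2) - e = 0" for x
      using K(3)[of x] e by simp
  qed (use K in auto)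
qed

definition C1c_approx ::
    "real \<Rightarrow> 'a::euclidean_space set \<Rightarrow> (nat \<Rightarrow> 'a \<Rightarrow> real) \<Rightarrow> (nat \<Rightarrow> 'a \<Rightarrow> 'a) \<Rightarrow> ('a \<Rightarrow> real) \<Rightarrow> ('a \<Rightarrow> 'a) \<Rightarrow> bool"
  where
  "C1c_approx p \<Omega> \<phi>s D\<phi>s \<phi> h \<longleftrightarrow>
     (\<forall>k. C1c_grad \<Omega> (\<phi>s k) (D\<phi>s k)) \<and>
     (\<lambda>k. integral\<^sup>L (lebesgue_on \<Omega>) (\<lambda>x. \<bar>\<phi>s k x - \<phi> x\<bar> powr p)) \<longlonglongrightarrow> 0 \<and>
     (\<lambda>k. integral\<^sup>L (lebesgue_on \<Omega>) (\<lambda>x. norm (D\<phi>s k x - h x) powr p)) \<longlonglongrightarrow> 0"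

lemma W01pE:
  assumes "u \<in> W01p p \<Omega>"
  obtains g \<phi>s D\<phi>s where "Lp_on p \<Omega> u" "weak_gradient \<Omega> u g" "Lp_on p \<Omega> g" "C1c_approx p \<Omega> \<phi>s D\<phi>s u g"
  using assms unfolding W01p_def C1c_approx_def by blast

lemma C1c_approx_diff:
  assumes "C1c_approx p \<Omega> \<phi>s D\<phi>s \<phi> h" "C1c_grad \<Omega> \<psi> D\<psi>"
  shows "C1c_approx p \<Omega> (\<lambda>k x. \<phi>s k x - \<psi> x) (\<lambda>k x. D\<phi>s k x - D\<psi> x) (\<lambda>x. \<phi> x - \<psi> x) (\<lambda>x. h x - D\<psi> x)"
  using assms unfolding C1c_approx_def by (auto intro: C1c_grad_diff)

text \<open>The witnesses are \<open>sqrt (\<psi>\<^sub>r\<^sub>(\<^sub>k\<^sub>)\<^sup>2 + e\<^sub>k\<^sup>2) - e\<^sub>k\<close> with \<open>e\<^sub>k \<rightarrow> 0\<close>, for a subsequence \<open>r\<close> along which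
  \<open>\<psi>\<^sub>r\<^sub>(\<^sub>k\<^sub>) \<rightarrow> \<psi>\<close> almost everywhere.\<close>

lemma C1c_approx_abs:
  assumes "open \<Omega>" "1 \<le> p" and approx: "C1c_approx p \<Omega> \<psi>s D\<psi>s \<psi> H"
    and \<psi>: "\<psi> \<in> borel_measurable (lebesgue_on \<Omega>)" "integrable (lebesgue_on \<Omega>) (\<lambda>x. \<bar>\<psi> x\<bar> powr p)"
  obtains r \<theta>s D\<theta>s where "strict_mono r" "\<And>k. C1c_grad \<Omega> (\<theta>s k) (D\<theta>s k)" "\<And>k x. 0 \<le> \<theta>s k x"
    "AE x in lebesgue_on \<Omega>. (\<lambda>k. \<theta>s k x) \<longlonglongrightarrow> \<bar>\<psi> x\<bar>"
    "\<And>k x. norm (D\<theta>s k x) \<le> norm (D\<psi>s (r k) x)"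
proof -
  let ?M = "lebesgue_on \<Omega>"
  have C: "C1c_grad \<Omega> (\<psi>s k) (D\<psi>s k)" for k
    using approx unfolding C1c_approx_def by blast
  have "integrable ?M (\<lambda>x. \<bar>\<psi>s k x - \<psi> x\<bar> powr p)" for k
    using integrable_norm_diff_powr[OF assms(2) C1c_grad_measurable(1)[OF assms(1) C] \<psi>(1)]
      C1c_grad_integrable_powr(1)[OF assms(1) C] \<psi>(2) assms(2) by simp
  moreover have "(\<lambda>k. integral\<^sup>L ?M (\<lambda>x. norm (\<bar>\<psi>s k x - \<psi> x\<bar> powr p))) \<longlonglongrightarrow> 0"
    using approx unfolding C1c_approx_def by simp
  ultimately obtain r where r: "strict_mono r"
    and r_lim: "AE x in ?M. (\<lambda>k. \<bar>\<psi>s (r k) x - \<psi> x\<bar> powr p) \<longlonglongrightarrow> 0"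
    using tendsto_L1_AE_subseq[of ?M "\<lambda>k x. \<bar>\<psi>s k x - \<psi> x\<bar> powr p"] by blast
  define e where "e k = 1 / (real k + 1)" for k
  have e: "0 < e k" for k by (simp add: e_def)
  have e_lim: "e \<longlonglongrightarrow> 0"
    unfolding e_def using LIMSEQ_inverse_real_of_nat by (simp add: inverse_eq_divide add.commute)
  define \<theta>s where "\<theta>s k x = sqrt ((\<psi>s (r k) x)^2 + (e k)^2) - e k" for k x
  define D\<theta>s where "D\<theta>s k x = (\<psi>s (r k) x / sqrt ((\<psi>s (r k) x)^2 + (e k)^2)) *\<^sub>R D\<psi>s (r k) x" for k x
  show ?thesis
  proof (rule that[OF r])
    show "C1c_grad \<Omega> (\<theta>s k) (D\<theta>s k)" for k
      unfolding \<theta>s_def[abs_def] D\<theta>s_def[abs_def] by (rule C1c_grad_smooth_abs[OF C e])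
    show "0 \<le> \<theta>s k x" for k x
      unfolding \<theta>s_def using smooth_abs_bounds(1)[OF e] by simp
    show "norm (D\<theta>s k x) \<le> norm (D\<psi>s (r k) x)" for k x
      using mult_right_mono[OF smooth_abs_bounds(3)[OF e, of "\<psi>s (r k) x" k] norm_ge_zero,
          of "D\<psi>s (r k) x"]
      unfolding D\<theta>s_def norm_scaleR by simp
    show "AE x in ?M. (\<lambda>k. \<theta>s k x) \<longlonglongrightarrow> \<bar>\<psi> x\<bar>"
      using r_lim
    proof eventually_elim
      case (elim x)
      have "(\<lambda>k. (\<bar>\<psi>s (r k) x - \<psi> x\<bar> powr p) powr (1 / p)) \<longlonglongrightarrow> 0"
        using assms(2) by (intro tendsto_zero_powrI[OF elim tendsto_const]) auto
      then have "(\<lambda>k. \<bar>\<psi>s (r k) x - \<psi> x\<bar>) \<longlonglongrightarrow> 0"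
        using assms(2) by (simp add: powr_powr)
      then have "(\<lambda>k. e k + \<bar>\<psi>s (r k) x - \<psi> x\<bar>) \<longlonglongrightarrow> 0"
        using tendsto_add[OF e_lim] by fastforce
      moreover have "norm (\<theta>s k x - \<bar>\<psi> x\<bar>) \<le> e k + \<bar>\<psi>s (r k) x - \<psi> x\<bar>" for k
        using smooth_abs_bounds(2)[OF e, of "\<psi>s (r k) x" k] abs_triangle_ineq3[of "\<psi>s (r k) x" "\<psi> x"]
        unfolding \<theta>s_def real_norm_def by linarith
      ultimately have "(\<lambda>k. \<theta>s k x - \<bar>\<psi> x\<bar>) \<longlonglongrightarrow> 0"
        using Lim_null_comparison[of "\<lambda>k. \<theta>s k x - \<bar>\<psi> x\<bar>" "\<lambda>k. e k + \<bar>\<psi>s (r k) x - \<psi> x\<bar>"]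
        by (simp add: always_eventually)
      then show ?case by (simp add: LIM_zero_iff)
    qed
  qed
qed

section \<open>Extension of the equation to \<open>W\<^sup>1\<^sup>,\<^sup>p\<^sub>0\<close>\<close>

text \<open>\<open>g\<close> stands for \<open>\<nabla>u\<close> and \<open>f\<close> for \<open>F(x,u)\<close>: \<open>-div(|g|\<^sup>p\<^sup>-\<^sup>2 g) = f \<ge> 0\<close> in the sense
  of distributions.\<close>

locale p_Laplacian_source =
  fixes \<Omega> :: "'a::euclidean_space set" and p :: real and g :: "'a \<Rightarrow> 'a" and f :: "'a \<Rightarrow> real"
  assumes open_domain: "open \<Omega>" and p_gt_1: "1 < p"
    and g_measurable: "g \<in> borel_measurable (lebesgue_on \<Omega>)"
    and g_integrable_powr: "integrable (lebesgue_on \<Omega>) (\<lambda>x. norm (g x) powr p)"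
    and f_measurable: "f \<in> borel_measurable (lebesgue_on \<Omega>)"
    and f_nonneg: "AE x in lebesgue_on \<Omega>. 0 \<le> f x"
    and test_integrable: "\<And>\<phi> D\<phi>. C1c_grad \<Omega> \<phi> D\<phi> \<Longrightarrow> integrable (lebesgue_on \<Omega>) (\<lambda>x. f x * \<phi> x)"
    and test_eq: "\<And>\<phi> D\<phi>. C1c_grad \<Omega> \<phi> D\<phi> \<Longrightarrow>
      integral\<^sup>L (lebesgue_on \<Omega>) (\<lambda>x. f x * \<phi> x)
      = integral\<^sup>L (lebesgue_on \<Omega>) (\<lambda>x. norm (g x) powr (p - 2) * (g x \<bullet> D\<phi> x))"
begin

lemma integral_mult_test_le:
  assumes C\<theta>: "C1c_grad \<Omega> \<theta> D\<theta>" and C\<psi>: "C1c_grad \<Omega> \<psi> D\<psi>"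
    and D_le: "\<And>x. norm (D\<theta> x) \<le> norm (D\<psi> x)" and \<epsilon>: "0 < \<epsilon>"
  shows "integral\<^sup>L (lebesgue_on \<Omega>) (\<lambda>x. f x * \<theta> x)
    \<le> \<epsilon> * integral\<^sup>L (lebesgue_on \<Omega>) (\<lambda>x. norm (g x) powr p)
      + \<epsilon> powr (1 - p) * integral\<^sup>L (lebesgue_on \<Omega>) (\<lambda>x. norm (D\<psi> x) powr p)"
proof -
  have p: "1 \<le> p" "0 < p" using p_gt_1 by auto
  note D\<theta> = C1c_grad_measurable(2)[OF open_domain C\<theta>] C1c_grad_integrable_powr(2)[OF open_domain C\<theta> p(2)]
  note D\<psi> = C1c_grad_measurable(2)[OF open_domain C\<psi>] C1c_grad_integrable_powr(2)[OF open_domain C\<psi> p(2)]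
  have "integral\<^sup>L (lebesgue_on \<Omega>) (\<lambda>x. f x * \<theta> x)
      = integral\<^sup>L (lebesgue_on \<Omega>) (\<lambda>x. norm (g x) powr (p - 2) * (g x \<bullet> D\<theta> x))"
    by (rule test_eq[OF C\<theta>])
  also have "\<dots> \<le> \<epsilon> * integral\<^sup>L (lebesgue_on \<Omega>) (\<lambda>x. norm (g x) powr p)
      + \<epsilon> powr (1 - p) * integral\<^sup>L (lebesgue_on \<Omega>) (\<lambda>x. norm (D\<theta> x) powr p)"
    using abs_integral_norm_powr_inner_le[OF p(1) \<epsilon> g_measurable g_integrable_powr D\<theta>] by linarith
  also have "integral\<^sup>L (lebesgue_on \<Omega>) (\<lambda>x. norm (D\<theta> x) powr p)
      \<le> integral\<^sup>L (lebesgue_on \<Omega>) (\<lambda>x. norm (D\<psi> x) powr p)"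
    using D\<theta> D\<psi> D_le p by (intro integral_mono powr_mono2) auto
  finally show ?thesis
    by (simp add: mult_left_mono)
qed

lemma integral_mult_abs_le:
  assumes approx: "C1c_approx p \<Omega> \<psi>s D\<psi>s \<psi> H"
    and \<psi>: "\<psi> \<in> borel_measurable (lebesgue_on \<Omega>)" "integrable (lebesgue_on \<Omega>) (\<lambda>x. \<bar>\<psi> x\<bar> powr p)"
    and H: "H \<in> borel_measurable (lebesgue_on \<Omega>)" "integrable (lebesgue_on \<Omega>) (\<lambda>x. norm (H x) powr p)"
    and \<epsilon>: "0 < \<epsilon>"
  shows "integrable (lebesgue_on \<Omega>) (\<lambda>x. f x * \<bar>\<psi> x\<bar>)"
    "integral\<^sup>L (lebesgue_on \<Omega>) (\<lambda>x. f x * \<bar>\<psi> x\<bar>)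
      \<le> \<epsilon> * integral\<^sup>L (lebesgue_on \<Omega>) (\<lambda>x. norm (g x) powr p)
        + \<epsilon> powr (1 - p) * (2 powr (p - 1) * integral\<^sup>L (lebesgue_on \<Omega>) (\<lambda>x. norm (H x) powr p))"
proof -
  let ?M = "lebesgue_on \<Omega>"
  let ?A = "integral\<^sup>L ?M (\<lambda>x. norm (g x) powr p)"
  let ?N = "\<lambda>v. integral\<^sup>L ?M (\<lambda>x. norm (v x) powr p)"
  have p: "1 \<le> p" "0 < p" using p_gt_1 by auto
  obtain r \<theta>s D\<theta>s where r: "strict_mono r" and C\<theta>: "\<And>k. C1c_grad \<Omega> (\<theta>s k) (D\<theta>s k)"
    and \<theta>_nonneg: "\<And>k x. 0 \<le> \<theta>s k x" and \<theta>_lim: "AE x in ?M. (\<lambda>k. \<theta>s k x) \<longlonglongrightarrow> \<bar>\<psi> x\<bar>"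
    and D\<theta>_le: "\<And>k x. norm (D\<theta>s k x) \<le> norm (D\<psi>s (r k) x)"
    using C1c_approx_abs[OF open_domain p(1) approx \<psi>] by blast
  have C: "C1c_grad \<Omega> (\<psi>s k) (D\<psi>s k)" for k
    using approx unfolding C1c_approx_def by blast
  note D\<psi> = C1c_grad_measurable(2)[OF open_domain C] C1c_grad_integrable_powr(2)[OF open_domain C p(2)]
  define b where "b k = \<epsilon> * ?A + \<epsilon> powr (1 - p) *
    (2 powr (p - 1) * (?N (\<lambda>x. D\<psi>s (r k) x - H x) + ?N H))" for k
  have bound: "integral\<^sup>L ?M (\<lambda>x. f x * \<theta>s k x) \<le> b k" for k
  proof -
    have "?N (D\<psi>s (r k)) \<le> 2 powr (p - 1) * (?N (\<lambda>x. D\<psi>s (r k) x - H x) + ?N H)"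
      by (rule integral_norm_powr_le[OF p(1) D\<psi>(1) H(1) D\<psi>(2) H(2)])
    then have "\<epsilon> powr (1 - p) * ?N (D\<psi>s (r k))
        \<le> \<epsilon> powr (1 - p) * (2 powr (p - 1) * (?N (\<lambda>x. D\<psi>s (r k) x - H x) + ?N H))"
      by (rule mult_left_mono) simp
    then show ?thesis
      using integral_mult_test_le[OF C\<theta>[of k] C[of "r k"] D\<theta>_le \<epsilon>] unfolding b_def by linarith
  qed
  have b_lim: "b \<longlonglongrightarrow> \<epsilon> * ?A + \<epsilon> powr (1 - p) * (2 powr (p - 1) * (0 + ?N H))"
  proof -
    have "(\<lambda>k. ?N (\<lambda>x. D\<psi>s (r k) x - H x)) \<longlonglongrightarrow> 0"
      using LIMSEQ_subseq_LIMSEQ[OF _ r] approx unfolding C1c_approx_def comp_def by blast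
    then show ?thesis unfolding b_def by (intro tendsto_intros)
  qed
  have nonneg: "AE x in ?M. 0 \<le> f x * \<theta>s k x" for k
    using f_nonneg by eventually_elim (simp add: \<theta>_nonneg)
  have lim: "AE x in ?M. (\<lambda>k. f x * \<theta>s k x) \<longlonglongrightarrow> f x * \<bar>\<psi> x\<bar>"
    using \<theta>_lim by eventually_elim (intro tendsto_mult tendsto_const)
  have "(\<lambda>x. f x * \<bar>\<psi> x\<bar>) \<in> borel_measurable ?M"
    using f_measurable \<psi>(1) by measurable
  from Fatou_integral_le[OF test_integrable[OF C\<theta>] nonneg lim this bound b_lim] show "integrable ?M (\<lambda>x. f x * \<bar>\<psi> x\<bar>)"
    "integral\<^sup>L ?M (\<lambda>x. f x * \<bar>\<psi> x\<bar>) \<le> \<epsilon> * ?A + \<epsilon> powr (1 - p) * (2 powr (p - 1) * ?N H)"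
    by simp_all
qed

lemma integrable_mult:
  assumes "C1c_approx p \<Omega> \<phi>s D\<phi>s \<phi> h"
    and \<phi>: "\<phi> \<in> borel_measurable (lebesgue_on \<Omega>)" "integrable (lebesgue_on \<Omega>) (\<lambda>x. \<bar>\<phi> x\<bar> powr p)"
    and "h \<in> borel_measurable (lebesgue_on \<Omega>)" "integrable (lebesgue_on \<Omega>) (\<lambda>x. norm (h x) powr p)"
  shows "integrable (lebesgue_on \<Omega>) (\<lambda>x. f x * \<phi> x)"
proof (rule Bochner_Integration.integrable_bound)
  show "integrable (lebesgue_on \<Omega>) (\<lambda>x. f x * \<bar>\<phi> x\<bar>)"
    using integral_mult_abs_le(1)[OF assms zero_less_one] .
  show "AE x in lebesgue_on \<Omega>. norm (f x * \<phi> x) \<le> norm (f x * \<bar>\<phi> x\<bar>)"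
    using f_nonneg by eventually_elim (simp add: abs_mult)
qed (use f_measurable \<phi>(1) in measurable)

lemma abs_integral_mult_diff_le:
  assumes approx: "C1c_approx p \<Omega> \<phi>s D\<phi>s \<phi> h"
    and \<phi>: "\<phi> \<in> borel_measurable (lebesgue_on \<Omega>)" "integrable (lebesgue_on \<Omega>) (\<lambda>x. \<bar>\<phi> x\<bar> powr p)"
    and h: "h \<in> borel_measurable (lebesgue_on \<Omega>)" "integrable (lebesgue_on \<Omega>) (\<lambda>x. norm (h x) powr p)"
    and C: "C1c_grad \<Omega> \<psi> D\<psi>" and \<epsilon>: "0 < \<epsilon>"
  shows "\<bar>integral\<^sup>L (lebesgue_on \<Omega>) (\<lambda>x. f x * \<psi> x) - integral\<^sup>L (lebesgue_on \<Omega>) (\<lambda>x. f x * \<phi> x)\<bar>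
    \<le> \<epsilon> * integral\<^sup>L (lebesgue_on \<Omega>) (\<lambda>x. norm (g x) powr p)
      + \<epsilon> powr (1 - p) * 2 powr (p - 1) * integral\<^sup>L (lebesgue_on \<Omega>) (\<lambda>x. norm (D\<psi> x - h x) powr p)"
proof -
  let ?M = "lebesgue_on \<Omega>"
  have p: "1 \<le> p" "0 < p" using p_gt_1 by auto
  note \<psi> = C1c_grad_measurable[OF open_domain C] C1c_grad_integrable_powr[OF open_domain C p(2)]
  have diff: "(\<lambda>x. \<phi> x - \<psi> x) \<in> borel_measurable ?M" "integrable ?M (\<lambda>x. \<bar>\<phi> x - \<psi> x\<bar> powr p)"
    "(\<lambda>x. h x - D\<psi> x) \<in> borel_measurable ?M" "integrable ?M (\<lambda>x. norm (h x - D\<psi> x) powr p)"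
    using \<phi> h \<psi> integrable_norm_diff_powr[OF p(1) \<phi>(1) \<psi>(1)] integrable_norm_diff_powr[OF p(1) h(1) \<psi>(2)]
    by auto
  note bound = integral_mult_abs_le[OF C1c_approx_diff[OF approx C] diff \<epsilon>]
  have "\<bar>integral\<^sup>L ?M (\<lambda>x. f x * \<psi> x) - integral\<^sup>L ?M (\<lambda>x. f x * \<phi> x)\<bar>
      = \<bar>integral\<^sup>L ?M (\<lambda>x. f x * (\<phi> x - \<psi> x))\<bar>"
    using test_integrable[OF C] integrable_mult[OF approx \<phi> h]
    by (simp add: right_diff_distrib Bochner_Integration.integral_diff)
  also have "\<dots> \<le> integral\<^sup>L ?M (\<lambda>x. \<bar>f x * (\<phi> x - \<psi> x)\<bar>)"
    by (rule integral_abs_bound)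
  also have "\<dots> = integral\<^sup>L ?M (\<lambda>x. f x * \<bar>\<phi> x - \<psi> x\<bar>)"
  proof (rule integral_cong_AE)
    show "AE x in ?M. \<bar>f x * (\<phi> x - \<psi> x)\<bar> = f x * \<bar>\<phi> x - \<psi> x\<bar>"
      using f_nonneg by eventually_elim (simp add: abs_mult)
    show "(\<lambda>x. \<bar>f x * (\<phi> x - \<psi> x)\<bar>) \<in> borel_measurable ?M"
      "(\<lambda>x. f x * \<bar>\<phi> x - \<psi> x\<bar>) \<in> borel_measurable ?M"
      using f_measurable diff(1) by measurable
  qed
  also have "\<dots> \<le> \<epsilon> * integral\<^sup>L ?M (\<lambda>x. norm (g x) powr p)
      + \<epsilon> powr (1 - p) * 2 powr (p - 1) * integral\<^sup>L ?M (\<lambda>x. norm (D\<psi> x - h x) powr p)"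
    using bound(2) by (simp add: norm_minus_commute mult.assoc)
  finally show ?thesis .
qed

lemma integral_mult_eq:
  assumes approx: "C1c_approx p \<Omega> \<phi>s D\<phi>s \<phi> h"
    and \<phi>: "\<phi> \<in> borel_measurable (lebesgue_on \<Omega>)" "integrable (lebesgue_on \<Omega>) (\<lambda>x. \<bar>\<phi> x\<bar> powr p)"
    and h: "h \<in> borel_measurable (lebesgue_on \<Omega>)" "integrable (lebesgue_on \<Omega>) (\<lambda>x. norm (h x) powr p)"
  shows "integral\<^sup>L (lebesgue_on \<Omega>) (\<lambda>x. f x * \<phi> x)
    = integral\<^sup>L (lebesgue_on \<Omega>) (\<lambda>x. norm (g x) powr (p - 2) * (g x \<bullet> h x))"
proof -
  let ?M = "lebesgue_on \<Omega>"
  have p: "1 \<le> p" "0 < p" using p_gt_1 by auto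
  have C: "C1c_grad \<Omega> (\<phi>s k) (D\<phi>s k)" for k
    using approx unfolding C1c_approx_def by blast
  have grad_lim: "(\<lambda>k. integral\<^sup>L ?M (\<lambda>x. norm (D\<phi>s k x - h x) powr p)) \<longlonglongrightarrow> 0"
    using approx unfolding C1c_approx_def by blast
  have "(\<lambda>k. integral\<^sup>L ?M (\<lambda>x. f x * \<phi>s k x) - integral\<^sup>L ?M (\<lambda>x. f x * \<phi> x)) \<longlonglongrightarrow> 0"
  proof (rule tendsto_zero_by_eps_bound[where c="\<lambda>\<epsilon>. \<epsilon> powr (1 - p) * 2 powr (p - 1)", OF _ grad_lim])
    show "\<bar>integral\<^sup>L ?M (\<lambda>x. f x * \<phi>s k x) - integral\<^sup>L ?M (\<lambda>x. f x * \<phi> x)\<bar>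
      \<le> \<epsilon> * integral\<^sup>L ?M (\<lambda>x. norm (g x) powr p)
        + \<epsilon> powr (1 - p) * 2 powr (p - 1) * integral\<^sup>L ?M (\<lambda>x. norm (D\<phi>s k x - h x) powr p)"
      if "0 < \<epsilon>" for \<epsilon> k
      by (rule abs_integral_mult_diff_le[OF approx \<phi> h C that])
  qed
  then have "(\<lambda>k. integral\<^sup>L ?M (\<lambda>x. f x * \<phi>s k x)) \<longlonglongrightarrow> integral\<^sup>L ?M (\<lambda>x. f x * \<phi> x)"
    by (simp add: LIM_zero_iff)
  moreover have "(\<lambda>k. integral\<^sup>L ?M (\<lambda>x. f x * \<phi>s k x))
      \<longlonglongrightarrow> integral\<^sup>L ?M (\<lambda>x. norm (g x) powr (p - 2) * (g x \<bullet> h x))"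
    unfolding test_eq[OF C]
    by (rule tendsto_integral_norm_powr_inner[OF p(1) g_measurable g_integrable_powr
          C1c_grad_measurable(2)[OF open_domain C] C1c_grad_integrable_powr(2)[OF open_domain C p(2)]
          h grad_lim])
  ultimately show ?thesis
    by (rule LIMSEQ_unique)
qed

end

lemma weak_solution_p_Laplacian_source:
  assumes "open \<Omega>" "1 < p" "caratheodory_nonneg \<Omega> F" "weak_solution p \<Omega> F u"
    and "weak_gradient \<Omega> u g" "Lp_on p \<Omega> g"
  shows "p_Laplacian_source \<Omega> p g (\<lambda>x. F x (u x))"
proof
  have loc: "locally_integrable_on \<Omega> (\<lambda>x. F x (u x))" and pos: "AE x in lebesgue_on \<Omega>. 0 < u x"
    and eq: "\<And>\<phi> D\<phi>. C1c_grad \<Omega> \<phi> D\<phi> \<Longrightarrow>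
      integral\<^sup>L (lebesgue_on \<Omega>) (\<lambda>x. norm (g x) powr (p - 2) * (g x \<bullet> D\<phi> x))
      = integral\<^sup>L (lebesgue_on \<Omega>) (\<lambda>x. F x (u x) * \<phi> x)"
    using assms(4,5) unfolding weak_solution_def by auto
  show "open \<Omega>" "1 < p" by fact+
  show "g \<in> borel_measurable (lebesgue_on \<Omega>)" "integrable (lebesgue_on \<Omega>) (\<lambda>x. norm (g x) powr p)"
    using assms(6) unfolding Lp_on_def by auto
  show "(\<lambda>x. F x (u x)) \<in> borel_measurable (lebesgue_on \<Omega>)"
    by (rule locally_integrable_on_measurable[OF assms(1) loc])
  have "AE x in lebesgue_on \<Omega>. x \<in> \<Omega>"
    by (rule AE_I2) simp
  with pos show "AE x in lebesgue_on \<Omega>. 0 \<le> F x (u x)"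
    by eventually_elim (use assms(3) in \<open>auto simp: caratheodory_nonneg_def\<close>)
  show "integrable (lebesgue_on \<Omega>) (\<lambda>x. F x (u x) * \<phi> x)" if "C1c_grad \<Omega> \<phi> D\<phi>" for \<phi> D\<phi>
    by (rule integrable_mult_C1c_grad[OF assms(1) loc that])
  show "integral\<^sup>L (lebesgue_on \<Omega>) (\<lambda>x. F x (u x) * \<phi> x)
      = integral\<^sup>L (lebesgue_on \<Omega>) (\<lambda>x. norm (g x) powr (p - 2) * (g x \<bullet> D\<phi> x))"
    if "C1c_grad \<Omega> \<phi> D\<phi>" for \<phi> D\<phi>
    using eq[OF that] by simp
qed

theorem mainTheorem3:
  fixes \<Omega> :: "'a::euclidean_space set" and p :: real
    and F :: "'a \<Rightarrow> real \<Rightarrow> real" and u :: "'a \<Rightarrow> real"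
  assumes "open \<Omega>" and "bounded \<Omega>"
    and "1 < p" and "p < real DIM('a)"
    and "caratheodory_nonneg \<Omega> F"
    and "weak_solution p \<Omega> F u"
  shows "(\<forall>phi\<in>W01p p \<Omega>. (AE x in lebesgue_on \<Omega>. phi x \<ge> 0) \<longrightarrow>
            integrable (lebesgue_on \<Omega>) (\<lambda>x. F x (u x) * phi x))
       \<and> (\<forall>phi\<in>W01p p \<Omega>.
            integrable (lebesgue_on \<Omega>) (\<lambda>x. F x (u x) * phi x) \<and>
            (\<forall>g h. weak_gradient \<Omega> u g \<longrightarrow> weak_gradient \<Omega> phi h \<longrightarrow>
               integral\<^sup>L (lebesgue_on \<Omega>) (\<lambda>x. norm (g x) powr (p - 2) * (g x \<bullet> h x))
               = integral\<^sup>L (lebesgue_on \<Omega>) (\<lambda>x. F x (u x) * phi x)))"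
proof -
  have "u \<in> W01p p \<Omega>"
    using assms(6) unfolding weak_solution_def by blast
  then obtain g0 where g0: "weak_gradient \<Omega> u g0" "Lp_on p \<Omega> g0"
    by (elim W01pE) blast
  interpret p_Laplacian_source \<Omega> p g0 "\<lambda>x. F x (u x)"
    by (rule weak_solution_p_Laplacian_source[OF assms(1,3,5,6) g0])
  have "integrable (lebesgue_on \<Omega>) (\<lambda>x. F x (u x) * \<phi> x) \<and>
      (\<forall>g h. weak_gradient \<Omega> u g \<longrightarrow> weak_gradient \<Omega> \<phi> h \<longrightarrow>
         integral\<^sup>L (lebesgue_on \<Omega>) (\<lambda>x. norm (g x) powr (p - 2) * (g x \<bullet> h x))
         = integral\<^sup>L (lebesgue_on \<Omega>) (\<lambda>x. F x (u x) * \<phi> x))"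
    if \<phi>_W01p: "\<phi> \<in> W01p p \<Omega>" for \<phi>
  proof -
    obtain h0 \<phi>s D\<phi>s where \<phi>: "Lp_on p \<Omega> \<phi>" "weak_gradient \<Omega> \<phi> h0" "Lp_on p \<Omega> h0"
      and approx: "C1c_approx p \<Omega> \<phi>s D\<phi>s \<phi> h0"
      using W01pE[OF \<phi>_W01p] by blast
    have Lp: "\<phi> \<in> borel_measurable (lebesgue_on \<Omega>)" "integrable (lebesgue_on \<Omega>) (\<lambda>x. \<bar>\<phi> x\<bar> powr p)"
      "h0 \<in> borel_measurable (lebesgue_on \<Omega>)" "integrable (lebesgue_on \<Omega>) (\<lambda>x. norm (h0 x) powr p)"
      using \<phi>(1,3) unfolding Lp_on_def by auto
    show ?thesis
      using integrable_mult[OF approx Lp] integral_mult_eq[OF approx Lp]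
        integral_norm_powr_inner_weak_gradients[OF assms(1) _ g0(1) _ \<phi>(2)] by auto
  qed
  then show ?thesis by blast
qed

end
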